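(* Let $(\Omega,\mathcal F,\mu)$ be a $\sigma$-finite measure space, let $p \in \mathcal P_>$, and let $E \colon \mathcal E(p) \to \mathbb R$ be a function such that for every $r \in \mathcal E(p)$ the representation $E_r = E\circ e_r \colon \mathcal S_r \to \mathbb R$ is Fréchet differentiable. Let $q \in \mathcal E(p)$. (1) If $p_1,p_2 \in \mathcal E(p)$ and $u_i = s_{p_i}(q)$, $i=1,2$, then for every $w \in B_q$, $$dE_{p_1}(u_1)\big(w - \mathbb E_{p_1}[w]\big) = dE_{p_2}(u_2)\big(w - \mathbb E_{p_2}[w]\big).$$ In particular, for $u = s_p(q)$, the map $w \mapsto dE_p(u)(w - \mathbb E_p[w])$ is a linear functional on $B_q$ which does not depend on the choice of $p$ with $q \in \mathcal E(p)$. (2) Assume moreover that, for $u = s_p(q)$, there is $\nabla E_p(u) \in B^*_p$ with $dE_p(u)v = \mathbb E_p[\nabla E_p(u)\, v]$ for all $v \in B_p$. Let $G$ be a vector field, i.e. a map assigning to each $r \in \mathcal E(p)$ an element $G(r) \in B_r$. Then $$dE_p(u)\big(G(q) - \mathbb E_p[G(q)]\big) = \mathbb E_q\Big[\tfrac{p}{q}\,\nabla E_p(u)\, G(q)\Big].$$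
   Context: $\mathcal P_>$ denotes the set of probability densities with respect to $\mu$ that are positive $\mu$-a.s. For $p\in\mathcal P_>$, $L^{\Phi}(p)$ is the Orlicz space of real random variables $u$ with $\mathbb E_p[\Phi(\alpha u)]<\infty$ for some $\alpha>0$, where $\Phi(y)=\cosh y-1$, with the Luxemburg norm (closed unit ball $\{v:\mathbb E_p[\Phi(v)]\le 1\}$); $L^{\Phi_*}(p)$ is the Orlicz space for $\Phi_*(x)=(1+|x|)\ln(1+|x|)-|x|$. Set $B_p=\{u\in L^\Phi(p):\mathbb E_p[u]=0\}$ and $B^*_p=\{v\in L^{\Phi_*}(p):\mathbb E_p[v]=0\}$. The cumulant functional is $K_p(u)=\ln \mathbb E_p[e^u]\in[0,+\infty]$ for $u\in B_p$, and $\mathcal S_p$ is the interior (in $B_p$) of its proper domain. The maximal exponential model is $\mathcal E(p)=\{e_p(u):u\in\mathcal S_p\}$ with $e_p(u)=e^{u-K_p(u)}\cdot p$; the chart $s_p\colon\mathcal E(p)\to\mathcal S_p$, $s_p(q)=\ln(q/p)-\mathbb E_p[\ln(q/p)]$, is the inverse of $e_p$. It is known that if $q\in\mathcal E(p)$ then $\mathcal E(q)=\mathcal E(p)$ and $L^\Phi(q)=L^\Phi(p)$ as vector spaces with equivalent norms, so $w-\mathbb E_p[w]\in B_p$ for $w\in B_q$. *)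

theory Defs
  imports "HOL-Analysis.Analysis"
begin

definition Phi :: "real \<Rightarrow> real" where
  "Phi y = cosh y - 1"

definition Phi_star :: "real \<Rightarrow> real" where
  "Phi_star x = (1 + \<bar>x\<bar>) * ln (1 + \<bar>x\<bar>) - \<bar>x\<bar>"

definition pos_dens :: "'a measure \<Rightarrow> ('a \<Rightarrow> real) set" where
  "pos_dens M = {p. p \<in> borel_measurable M \<and> (AE x in M. p x > 0) \<and>
      integrable M p \<and> (\<integral>x. p x \<partial>M) = 1}"

definition Ep :: "'a measure \<Rightarrow> ('a \<Rightarrow> real) \<Rightarrow> ('a \<Rightarrow> real) \<Rightarrow> real" where
  "Ep M p f = (\<integral>x. p x * f x \<partial>M)"

definition orlicz :: "'a measure \<Rightarrow> (real \<Rightarrow> real) \<Rightarrow> ('a \<Rightarrow> real) \<Rightarrow> ('a \<Rightarrow> real) set" where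
  "orlicz M F p = {u. u \<in> borel_measurable M \<and>
      (\<exists>\<alpha>>0. (\<integral>\<^sup>+x. ennreal (p x * F (\<alpha> * u x)) \<partial>M) < \<infinity>)}"

definition lux_norm :: "'a measure \<Rightarrow> ('a \<Rightarrow> real) \<Rightarrow> ('a \<Rightarrow> real) \<Rightarrow> real" where
  "lux_norm M p u = Inf {c. c > 0 \<and> (\<integral>\<^sup>+x. ennreal (p x * Phi (u x / c)) \<partial>M) \<le> 1}"

definition Bsp :: "'a measure \<Rightarrow> ('a \<Rightarrow> real) \<Rightarrow> ('a \<Rightarrow> real) set" where
  "Bsp M p = {u \<in> orlicz M Phi p. Ep M p u = 0}"

definition Bstar :: "'a measure \<Rightarrow> ('a \<Rightarrow> real) \<Rightarrow> ('a \<Rightarrow> real) set" where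
  "Bstar M p = {v \<in> orlicz M Phi_star p. Ep M p v = 0}"

definition Kp :: "'a measure \<Rightarrow> ('a \<Rightarrow> real) \<Rightarrow> ('a \<Rightarrow> real) \<Rightarrow> real" where
  "Kp M p u = ln (\<integral>x. p x * exp (u x) \<partial>M)"

definition dom_K :: "'a measure \<Rightarrow> ('a \<Rightarrow> real) \<Rightarrow> ('a \<Rightarrow> real) set" where
  "dom_K M p = {u \<in> Bsp M p. (\<integral>\<^sup>+x. ennreal (p x * exp (u x)) \<partial>M) < \<infinity>}"

definition Sp :: "'a measure \<Rightarrow> ('a \<Rightarrow> real) \<Rightarrow> ('a \<Rightarrow> real) set" where
  "Sp M p = {u \<in> Bsp M p. \<exists>\<epsilon>>0. \<forall>v\<in>Bsp M p.
      lux_norm M p (\<lambda>x. v x - u x) < \<epsilon> \<longrightarrow> v \<in> dom_K M p}"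

definition e_p :: "'a measure \<Rightarrow> ('a \<Rightarrow> real) \<Rightarrow> ('a \<Rightarrow> real) \<Rightarrow> ('a \<Rightarrow> real)" where
  "e_p M p u = (\<lambda>x. exp (u x - Kp M p u) * p x)"

definition s_p :: "'a measure \<Rightarrow> ('a \<Rightarrow> real) \<Rightarrow> ('a \<Rightarrow> real) \<Rightarrow> ('a \<Rightarrow> real)" where
  "s_p M p q = (\<lambda>x. ln (q x / p x) - Ep M p (\<lambda>y. ln (q y / p y)))"

definition maxexp :: "'a measure \<Rightarrow> ('a \<Rightarrow> real) \<Rightarrow> ('a \<Rightarrow> real) set" where
  "maxexp M p = e_p M p ` Sp M p"

definition frechet_deriv ::
  "'a measure \<Rightarrow> ('a \<Rightarrow> real) \<Rightarrow> (('a \<Rightarrow> real) \<Rightarrow> real) \<Rightarrow> ('a \<Rightarrow> real)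
     \<Rightarrow> (('a \<Rightarrow> real) \<Rightarrow> real) \<Rightarrow> bool" where
  "frechet_deriv M r F u L \<longleftrightarrow>
     (\<forall>v\<in>Bsp M r. \<forall>w\<in>Bsp M r. \<forall>a b::real.
        L (\<lambda>x. a * v x + b * w x) = a * L v + b * L w) \<and>
     (\<exists>C. \<forall>v\<in>Bsp M r. \<bar>L v\<bar> \<le> C * lux_norm M r v) \<and>
     (\<forall>\<epsilon>>0. \<exists>\<delta>>0. \<forall>h\<in>Bsp M r.
        (\<lambda>x. u x + h x) \<in> Sp M r \<and> lux_norm M r h < \<delta> \<longrightarrow>
        \<bar>F (\<lambda>x. u x + h x) - F u - L h\<bar> \<le> \<epsilon> * lux_norm M r h)"

definition linear_on :: "('a \<Rightarrow> real) set \<Rightarrow> (('a \<Rightarrow> real) \<Rightarrow> real) \<Rightarrow> bool" where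
  "linear_on B L \<longleftrightarrow> (\<forall>v\<in>B. \<forall>w\<in>B. \<forall>a b::real.
        L (\<lambda>x. a * v x + b * w x) = a * L v + b * L w)"

end

theory Submission
  imports Defs
begin

text \<open>Write \<open>q = e\<^sub>p b\<close> and \<open>p\<^sub>i = e\<^sub>p a\<^sub>i\<close>. Charts of the same maximal exponential model differ by an
  affine change, \<open>s\<^sub>p\<^sub>i (e\<^sub>p c) = c - a\<^sub>i + const\<close>, so the chart at \<open>p\<^sub>i\<close> maps the exponential curve
  \<open>t \<mapsto> e\<^sub>p (b + t (w - E\<^sub>p w))\<close> onto the line \<open>s\<^sub>p\<^sub>i q + t (w - E\<^sub>p\<^sub>i w)\<close>. Hence
  \<open>dE\<^sub>p\<^sub>i (s\<^sub>p\<^sub>i q) (w - E\<^sub>p\<^sub>i w)\<close> is the right derivative at \<open>0\<close> of \<open>t \<mapsto> E (e\<^sub>p (b + t (w - E\<^sub>p w)))\<close>,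
  which does not involve \<open>p\<^sub>i\<close>. That the line stays in \<open>S\<^sub>p\<^sub>i\<close> rests on the equivalence of the Luxemburg
  norms of \<open>p\<close> and \<open>e\<^sub>p a\<close>, which comes from \<open>\<Phi> x ^ 2\<^sup>n \<le> \<Phi> (2\<^sup>n x)\<close> and the integrability of
  \<open>exp ((1 + \<epsilon>) a)\<close> for \<open>a \<in> S\<^sub>p\<close>. The gradient formula is a computation: \<open>E\<^sub>p \<nabla> = 0\<close> removes the
  centring constant, and \<open>p / q\<close> changes the density.\<close>

section \<open>The Young functions\<close>

lemma Phi_nonneg: "0 \<le> Phi x"
  using cosh_real_ge_1[of x] by (simp add: Phi_def)

lemma Phi_0 [simp]: "Phi 0 = 0"
  by (simp add: Phi_def)

lemma Phi_eq_exp: "Phi x = (exp x + exp (- x)) / 2 - 1"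
  by (simp add: Phi_def cosh_def)

lemma Phi_abs: "Phi \<bar>x\<bar> = Phi x"
  by (simp add: Phi_def)

lemma Phi_convex:
  assumes "0 \<le> l" "l \<le> 1"
  shows "Phi (l * x + (1 - l) * y) \<le> l * Phi x + (1 - l) * Phi y"
proof -
  have exp_conv: "exp (l * s + (1 - l) * t) \<le> l * exp s + (1 - l) * exp t" for s t
    using convex_onD[OF exp_convex, of l t s] assms by (simp add: add.commute)
  have "- (l * x + (1 - l) * y) = l * (-x) + (1 - l) * (-y)" by algebra
  then show ?thesis
    unfolding Phi_eq_exp using exp_conv[of x y] exp_conv[of "-x" "-y"] by (simp add: field_simps)
qed

lemma Phi_scale_le: "0 \<le> l \<Longrightarrow> l \<le> 1 \<Longrightarrow> Phi (l * x) \<le> l * Phi x"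
  using Phi_convex[of l x 0] by (simp add: Phi_def)

lemma Phi_mono_abs:
  assumes "\<bar>x\<bar> \<le> \<bar>y\<bar>"
  shows "Phi x \<le> Phi y"
proof (cases "y = 0")
  case True
  then show ?thesis using assms by simp
next
  case False
  define l where "l = \<bar>x\<bar> / \<bar>y\<bar>"
  have l: "0 \<le> l" "l \<le> 1" using assms False by (auto simp: l_def)
  have "Phi \<bar>x\<bar> = Phi (l * \<bar>y\<bar>)" using False by (simp add: l_def)
  also have "\<dots> \<le> l * Phi \<bar>y\<bar>" using Phi_scale_le l by blast
  also have "\<dots> \<le> Phi \<bar>y\<bar>" using l Phi_nonneg[of "\<bar>y\<bar>"] by (metis mult_left_le_one_le)
  finally show ?thesis by (simp add: Phi_abs)
qed

lemma Phi_square_le: "(Phi x)\<^sup>2 \<le> Phi (2 * x)"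
proof -
  have "cosh (2 * x) = 2 * (cosh x)\<^sup>2 - 1" using cosh_double[of x] cosh_square_eq[of x] by simp
  then have "Phi (2 * x) = (Phi x)\<^sup>2 + Phi x * (Phi x + 4)"
    unfolding Phi_def by (simp add: algebra_simps power2_eq_square)
  then show ?thesis using Phi_nonneg[of x] by simp
qed

lemma Phi_power_le: "(Phi x) ^ (2 ^ n) \<le> Phi (2 ^ n * x)"
proof (induction n arbitrary: x)
  case 0
  then show ?case by simp
next
  case (Suc n)
  have "(Phi x) ^ (2 ^ Suc n) = ((Phi x) ^ (2 ^ n))\<^sup>2" by (simp add: power_mult[symmetric] mult.commute)
  also have "\<dots> \<le> (Phi (2 ^ n * x))\<^sup>2" using Suc Phi_nonneg by (intro power_mono) auto
  also have "\<dots> \<le> Phi (2 * (2 ^ n * x))" by (rule Phi_square_le)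
  finally show ?case by (simp add: mult.assoc)
qed

lemma exp_abs_le_Phi: "exp \<bar>x\<bar> \<le> 2 * Phi x + 2"
  unfolding Phi_eq_exp by (cases "x \<ge> 0") auto

lemma exp_le_Phi: "exp x \<le> 2 * Phi x + 2"
  using exp_abs_le_Phi[of x] by (smt (verit) abs_ge_self exp_le_cancel_iff)

lemma abs_le_Phi: "\<bar>x\<bar> \<le> 2 * Phi x + 2"
  using exp_ge_add_one_self[of "\<bar>x\<bar>"] exp_abs_le_Phi[of x] by linarith

lemma Phi_half_le_1: "Phi (1 / 2) \<le> 1"
proof -
  have "exp (1 / 2 :: real) \<le> 3" using exp_le exp_le_cancel_iff[of "1 / 2" 1] by linarith
  moreover have "exp (- (1 / 2 :: real)) \<le> 1" by simp
  moreover have "\<And>A B :: real. A \<le> 3 \<Longrightarrow> B \<le> 1 \<Longrightarrow> (A + B) / 2 - 1 \<le> 1" by simp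
  ultimately show ?thesis unfolding Phi_eq_exp by blast
qed

lemma measurable_Phi[measurable]: "f \<in> borel_measurable M \<Longrightarrow> (\<lambda>x. Phi (f x)) \<in> borel_measurable M"
  by (rule borel_measurable_continuous_on[where f = Phi]) (auto simp: Phi_def intro!: continuous_intros)

section \<open>The Luxemburg norm\<close>

lemma ennreal_mult_left_mono_nonneg:
  assumes "0 \<le> a" "a \<le> b"
  shows "ennreal (r * a) \<le> ennreal (r * b)"
proof (cases "r \<ge> 0")
  case True
  then show ?thesis using assms by (intro ennreal_leI mult_left_mono)
next
  case False
  then have "r * a \<le> 0" using assms by (simp add: mult_nonpos_nonneg)
  then show ?thesis by (simp add: ennreal_neg)
qed

lemma ennreal_mult_combination_le:
  assumes "0 \<le> s" "0 \<le> t" "0 \<le> A" "0 \<le> B"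
  shows "ennreal (r * (s * A + t * B)) \<le> ennreal s * ennreal (r * A) + ennreal t * ennreal (r * B)"
proof (cases "r \<ge> 0")
  case True
  then have "ennreal (r * (s * A + t * B)) = ennreal (s * (r * A)) + ennreal (t * (r * B))"
    using assms by (simp add: ennreal_plus[symmetric] algebra_simps del: ennreal_plus)
  then show ?thesis using assms True by (simp add: ennreal_mult)
next
  case False
  then show ?thesis using assms by (simp add: ennreal_neg mult_nonpos_nonneg)
qed

definition lux_radii :: "'a measure \<Rightarrow> ('a \<Rightarrow> real) \<Rightarrow> ('a \<Rightarrow> real) \<Rightarrow> real set" where
  "lux_radii M r u = {c. c > 0 \<and> (\<integral>\<^sup>+x. ennreal (r x * Phi (u x / c)) \<partial>M) \<le> 1}"

lemma lux_norm_eq_Inf_radii: "lux_norm M r u = Inf (lux_radii M r u)"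
  by (simp add: lux_norm_def lux_radii_def)

lemma lux_radii_pos: "c \<in> lux_radii M r u \<Longrightarrow> c > 0" by (simp add: lux_radii_def)

lemma lux_radii_upward:
  assumes "c \<in> lux_radii M r u" "c \<le> c'"
  shows "c' \<in> lux_radii M r u"
proof -
  have c: "c > 0" using assms lux_radii_pos by blast
  have "(\<integral>\<^sup>+x. ennreal (r x * Phi (u x / c')) \<partial>M) \<le> (\<integral>\<^sup>+x. ennreal (r x * Phi (u x / c)) \<partial>M)"
  proof (rule nn_integral_mono)
    fix x
    have "\<bar>u x / c'\<bar> \<le> \<bar>u x / c\<bar>" using c assms(2)
      by (simp add: abs_div frac_le divide_left_mono)
    then show "ennreal (r x * Phi (u x / c')) \<le> ennreal (r x * Phi (u x / c))"
      by (intro ennreal_mult_left_mono_nonneg Phi_nonneg Phi_mono_abs)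
  qed
  also have "\<dots> \<le> 1" using assms(1) by (simp add: lux_radii_def)
  finally show ?thesis using c assms(2) by (simp add: lux_radii_def)
qed

lemma lux_radii_bdd_below: "bdd_below (lux_radii M r u)"
  by (rule bdd_belowI[of _ 0]) (auto simp: lux_radii_def)

lemma lux_norm_nonneg_radii: "lux_radii M r u \<noteq> {} \<Longrightarrow> 0 \<le> lux_norm M r u"
  unfolding lux_norm_eq_Inf_radii by (rule cInf_greatest) (auto simp: lux_radii_def)

lemma lux_norm_le_radius: "c \<in> lux_radii M r u \<Longrightarrow> lux_norm M r u \<le> c"
  unfolding lux_norm_eq_Inf_radii by (rule cInf_lower[OF _ lux_radii_bdd_below])

lemma lux_radii_gt_norm:
  assumes "lux_radii M r u \<noteq> {}" "lux_norm M r u < c"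
  shows "c \<in> lux_radii M r u"
proof -
  obtain c' where "c' \<in> lux_radii M r u" "c' < c"
    using assms cInf_less_iff[OF assms(1) lux_radii_bdd_below] unfolding lux_norm_eq_Inf_radii by blast
  then show ?thesis using lux_radii_upward by fastforce
qed

lemma lux_norm_leI:
  assumes "\<And>c. c > B \<Longrightarrow> c \<in> lux_radii M r u"
  shows "lux_norm M r u \<le> B"
proof (rule field_le_epsilon)
  fix e :: real assume "0 < e"
  then have "B + e \<in> lux_radii M r u" using assms by simp
  then show "lux_norm M r u \<le> B + e" by (rule lux_norm_le_radius)
qed

lemma lux_norm_le_mult:
  assumes ne: "lux_radii M P g \<noteq> {}" and C: "C > 0"
    and radii: "\<And>l. l \<in> lux_radii M P g \<Longrightarrow> C * l \<in> lux_radii M R g"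
  shows "lux_norm M R g \<le> C * lux_norm M P g"
proof (rule lux_norm_leI)
  fix c assume "C * lux_norm M P g < c"
  then have "c / C \<in> lux_radii M P g" using C by (intro lux_radii_gt_norm[OF ne]) (simp add: field_simps)
  then show "c \<in> lux_radii M R g" using radii[of "c / C"] C by simp
qed

lemma measurable_Phi_density[measurable]:
  assumes [measurable]: "r \<in> borel_measurable M" "u \<in> borel_measurable M"
  shows "(\<lambda>x. ennreal (r x * Phi (u x / c))) \<in> borel_measurable M"
  by measurable

lemma lux_radii_add:
  assumes r: "r \<in> borel_measurable M" and u: "u \<in> borel_measurable M" and v: "v \<in> borel_measurable M"
    and a: "a \<in> lux_radii M r u" and b: "b \<in> lux_radii M r v"
  shows "a + b \<in> lux_radii M r (\<lambda>x. u x + v x)"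
proof -
  have a0: "a > 0" and b0: "b > 0" using a b lux_radii_pos by auto
  define c where "c = a + b"
  have c0: "c > 0" using a0 b0 by (simp add: c_def)
  have l: "0 \<le> a / c" "a / c \<le> 1" "1 - a / c = b / c" using a0 b0 by (auto simp: c_def field_simps)
  have pt: "ennreal (r x * Phi ((u x + v x) / c)) \<le>
      ennreal (a / c) * ennreal (r x * Phi (u x / a)) + ennreal (b / c) * ennreal (r x * Phi (v x / b))" for x
  proof -
    have "(a / c) * (u x / a) + (1 - a / c) * (v x / b) = u x / c + v x / c"
      using a0 b0 l(3) by simp
    then have e: "(u x + v x) / c = (a / c) * (u x / a) + (1 - a / c) * (v x / b)"
      by (simp add: add_divide_distrib)
    have "Phi ((u x + v x) / c) \<le> (a / c) * Phi (u x / a) + (b / c) * Phi (v x / b)"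
      unfolding e l(3)[symmetric] by (rule Phi_convex[OF l(1,2)])
    then have "ennreal (r x * Phi ((u x + v x) / c)) \<le> ennreal (r x * ((a / c) * Phi (u x / a) + (b / c) * Phi (v x / b)))"
      by (intro ennreal_mult_left_mono_nonneg Phi_nonneg)
    also have "\<dots> \<le> ennreal (a / c) * ennreal (r x * Phi (u x / a)) + ennreal (b / c) * ennreal (r x * Phi (v x / b))"
      using a0 b0 c0 by (intro ennreal_mult_combination_le Phi_nonneg) auto
    finally show ?thesis .
  qed
  have "(\<integral>\<^sup>+x. ennreal (r x * Phi ((u x + v x) / c)) \<partial>M) \<le>
      (\<integral>\<^sup>+x. ennreal (a / c) * ennreal (r x * Phi (u x / a)) + ennreal (b / c) * ennreal (r x * Phi (v x / b)) \<partial>M)"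
    by (rule nn_integral_mono) (rule pt)
  also have "\<dots> = ennreal (a / c) * (\<integral>\<^sup>+x. ennreal (r x * Phi (u x / a)) \<partial>M) +
       ennreal (b / c) * (\<integral>\<^sup>+x. ennreal (r x * Phi (v x / b)) \<partial>M)"
  proof -
    note m1[measurable] = measurable_Phi_density[OF r u, of a]
    note m2[measurable] = measurable_Phi_density[OF r v, of b]
    show ?thesis by (subst nn_integral_add) (auto simp: nn_integral_cmult)
  qed
  also have "\<dots> \<le> ennreal (a / c) * 1 + ennreal (b / c) * 1"
    using a b unfolding lux_radii_def by (intro add_mono mult_left_mono) auto
  also have "\<dots> = 1" using a0 b0 c0 by (simp add: ennreal_plus[symmetric] c_def add_divide_distrib[symmetric])
  finally show ?thesis using c0 by (simp add: lux_radii_def c_def)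
qed

lemma lux_radii_scale:
  assumes c: "c \<in> lux_radii M r u" and t: "t \<noteq> 0"
  shows "\<bar>t\<bar> * c \<in> lux_radii M r (\<lambda>x. t * u x)"
proof -
  have c0: "c > 0" using c lux_radii_pos by blast
  have "\<bar>t * u x / (\<bar>t\<bar> * c)\<bar> = \<bar>u x / c\<bar>" for x using t c0 by (simp add: abs_mult abs_div)
  then have "Phi (t * u x / (\<bar>t\<bar> * c)) = Phi (u x / c)" for x
    by (metis Phi_abs)
  then show ?thesis using c c0 t by (simp add: lux_radii_def)
qed

lemma lux_norm_scale_radii:
  assumes "lux_radii M r u \<noteq> {}"
  shows "lux_norm M r (\<lambda>x. t * u x) \<le> \<bar>t\<bar> * lux_norm M r u"
proof (rule lux_norm_leI)
  fix c assume c: "\<bar>t\<bar> * lux_norm M r u < c"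
  show "c \<in> lux_radii M r (\<lambda>x. t * u x)"
  proof (cases "t = 0")
    case True
    then show ?thesis using c by (simp add: lux_radii_def)
  next
    case False
    then have "lux_norm M r u < c / \<bar>t\<bar>" using c by (simp add: field_simps)
    then have "c / \<bar>t\<bar> \<in> lux_radii M r u" using lux_radii_gt_norm assms by blast
    from lux_radii_scale[OF this False] show ?thesis using False by simp
  qed
qed

lemma lux_norm_triangle_radii:
  assumes r: "r \<in> borel_measurable M" and u: "u \<in> borel_measurable M" and v: "v \<in> borel_measurable M"
    and "lux_radii M r u \<noteq> {}" "lux_radii M r v \<noteq> {}"
  shows "lux_norm M r (\<lambda>x. u x + v x) \<le> lux_norm M r u + lux_norm M r v"
proof (rule lux_norm_leI)
  fix c assume c: "lux_norm M r u + lux_norm M r v < c"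
  define d where "d = (c - lux_norm M r u - lux_norm M r v) / 2"
  have d: "d > 0" using c by (simp add: d_def)
  have "lux_norm M r u + d \<in> lux_radii M r u" using lux_radii_gt_norm[OF assms(4)] d by simp
  moreover have "lux_norm M r v + d \<in> lux_radii M r v" using lux_radii_gt_norm[OF assms(5)] d by simp
  ultimately have "(lux_norm M r u + d) + (lux_norm M r v + d) \<in> lux_radii M r (\<lambda>x. u x + v x)"
    using lux_radii_add r u v by blast
  moreover have "(lux_norm M r u + d) + (lux_norm M r v + d) = c" by (simp add: d_def)
  ultimately show "c \<in> lux_radii M r (\<lambda>x. u x + v x)" by simp
qed

section \<open>Orlicz spaces of a positive density\<close>

lemma pos_dens_measurable: "r \<in> pos_dens M \<Longrightarrow> r \<in> borel_measurable M" by (simp add: pos_dens_def)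
lemma pos_dens_AE_pos: "r \<in> pos_dens M \<Longrightarrow> AE x in M. r x > 0" by (simp add: pos_dens_def)
lemma pos_dens_AE_nonneg: "r \<in> pos_dens M \<Longrightarrow> AE x in M. r x \<ge> 0" using pos_dens_AE_pos by (fastforce elim: AE_mp)

lemma pos_dens_nn_integral:
  assumes "r \<in> pos_dens M"
  shows "(\<integral>\<^sup>+x. ennreal (r x) \<partial>M) = 1"
proof -
  have "(\<integral>\<^sup>+x. ennreal (r x) \<partial>M) = ennreal (\<integral>x. r x \<partial>M)"
    using assms by (intro nn_integral_eq_integral) (auto simp: pos_dens_def pos_dens_AE_nonneg)
  then show ?thesis using assms by (simp add: pos_dens_def)
qed

lemma integrable_density_nonneg:
  assumes p: "p \<in> pos_dens M" and h: "h \<in> borel_measurable M" "\<And>x. 0 \<le> h x"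
    and fin: "(\<integral>\<^sup>+x. ennreal (p x * h x) \<partial>M) < \<infinity>"
  shows "integrable M (\<lambda>x. p x * h x)"
  using pos_dens_measurable[OF p] pos_dens_AE_nonneg[OF p] h fin
  by (intro integrableI_nonneg) (auto elim!: AE_mp)

lemma lux_radii_of_nn_integral_le:
  assumes [measurable]: "r \<in> borel_measurable M" "u \<in> borel_measurable M"
    and \<alpha>: "\<alpha> > 0" and m: "m \<ge> 1" and A: "(\<integral>\<^sup>+x. ennreal (r x * Phi (\<alpha> * u x)) \<partial>M) \<le> ennreal m"
  shows "m / \<alpha> \<in> lux_radii M r u"
proof -
  have pt: "ennreal (r x * Phi (u x / (m / \<alpha>))) \<le> ennreal (1 / m) * ennreal (r x * Phi (\<alpha> * u x))" for x
  proof -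
    have "u x / (m / \<alpha>) = (1 / m) * (\<alpha> * u x)" using \<alpha> m by simp
    then have "Phi (u x / (m / \<alpha>)) \<le> (1 / m) * Phi (\<alpha> * u x)" using m Phi_scale_le[of "1 / m" "\<alpha> * u x"] by (simp add: mult.commute)
    then have "ennreal (r x * Phi (u x / (m / \<alpha>))) \<le> ennreal (r x * ((1 / m) * Phi (\<alpha> * u x)))"
      by (rule ennreal_mult_left_mono_nonneg[OF Phi_nonneg])
    also have "\<dots> = ennreal ((1 / m) * (r x * Phi (\<alpha> * u x)))" by (simp add: algebra_simps)
    also have "\<dots> = ennreal (1 / m) * ennreal (r x * Phi (\<alpha> * u x))" using m by (intro ennreal_mult') simp
    finally show ?thesis .
  qed
  have "(\<integral>\<^sup>+x. ennreal (r x * Phi (u x / (m / \<alpha>))) \<partial>M) \<le> (\<integral>\<^sup>+x. ennreal (1 / m) * ennreal (r x * Phi (\<alpha> * u x)) \<partial>M)"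
    by (rule nn_integral_mono) (rule pt)
  also have "\<dots> = ennreal (1 / m) * (\<integral>\<^sup>+x. ennreal (r x * Phi (\<alpha> * u x)) \<partial>M)"
    by (rule nn_integral_cmult) measurable
  also have "\<dots> \<le> ennreal (1 / m) * ennreal m" using A by (rule mult_left_mono) simp
  also have "\<dots> = 1" using m by (simp add: ennreal_mult[symmetric])
  finally show ?thesis using \<alpha> m by (simp add: lux_radii_def)
qed

lemma orlicz_Phi_iff_radii:
  assumes r: "r \<in> borel_measurable M"
  shows "u \<in> orlicz M Phi r \<longleftrightarrow> u \<in> borel_measurable M \<and> lux_radii M r u \<noteq> {}"
proof
  assume "u \<in> orlicz M Phi r"
  then obtain \<alpha> where u: "u \<in> borel_measurable M" and \<alpha>: "\<alpha> > 0"
      and A: "(\<integral>\<^sup>+x. ennreal (r x * Phi (\<alpha> * u x)) \<partial>M) < \<infinity>"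
    by (auto simp: orlicz_def)
  define m where "m = max 1 (enn2real (\<integral>\<^sup>+x. ennreal (r x * Phi (\<alpha> * u x)) \<partial>M))"
  have "(\<integral>\<^sup>+x. ennreal (r x * Phi (\<alpha> * u x)) \<partial>M) \<le> ennreal m"
    using A by (cases "\<integral>\<^sup>+x. ennreal (r x * Phi (\<alpha> * u x)) \<partial>M") (auto simp: m_def ennreal_leI)
  then have "m / \<alpha> \<in> lux_radii M r u" by (intro lux_radii_of_nn_integral_le[OF r u \<alpha>]) (simp_all add: m_def)
  then show "u \<in> borel_measurable M \<and> lux_radii M r u \<noteq> {}" using u by blast
next
  assume "u \<in> borel_measurable M \<and> lux_radii M r u \<noteq> {}"
  then obtain c where u: "u \<in> borel_measurable M" and c: "c \<in> lux_radii M r u" by blast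
  then have "c > 0" "(\<integral>\<^sup>+x. ennreal (r x * Phi ((1 / c) * u x)) \<partial>M) \<le> 1" by (simp_all add: lux_radii_def)
  then show "u \<in> orlicz M Phi r" using u unfolding orlicz_def
    by (intro CollectI conjI exI[of _ "1 / c"]) (auto intro: order.strict_trans1[where b = 1])
qed

lemma lux_radii_const:
  assumes r: "r \<in> pos_dens M"
  shows "2 * \<bar>k\<bar> + 1 \<in> lux_radii M r (\<lambda>_. k)"
proof -
  define c where "c = 2 * \<bar>k\<bar> + 1"
  have c0: "c > 0" by (simp add: c_def)
  have "\<bar>k / c\<bar> \<le> \<bar>1/2\<bar>" using c0 by (simp add: c_def abs_div field_simps)
  then have "Phi (k / c) \<le> Phi (1/2)" by (rule Phi_mono_abs)
  then have P: "Phi (k / c) \<le> 1" using Phi_half_le_1 by linarith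
  have "(\<integral>\<^sup>+x. ennreal (r x * Phi (k / c)) \<partial>M) \<le> (\<integral>\<^sup>+x. ennreal (r x * 1) \<partial>M)"
    by (rule nn_integral_mono) (intro ennreal_mult_left_mono_nonneg Phi_nonneg P)
  also have "\<dots> = 1" using pos_dens_nn_integral[OF r] by simp
  finally show ?thesis using c0 by (simp add: lux_radii_def c_def)
qed

lemma orlicz_const: "r \<in> pos_dens M \<Longrightarrow> (\<lambda>_. k) \<in> orlicz M Phi r"
  using orlicz_Phi_iff_radii[OF pos_dens_measurable] lux_radii_const by fastforce

lemma orlicz_measurable: "u \<in> orlicz M Phi r \<Longrightarrow> u \<in> borel_measurable M"
  by (simp add: orlicz_def)

lemma orlicz_radii_nonempty: "r \<in> pos_dens M \<Longrightarrow> u \<in> orlicz M Phi r \<Longrightarrow> lux_radii M r u \<noteq> {}"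
  using orlicz_Phi_iff_radii[OF pos_dens_measurable] by blast

lemma orlicz_add:
  assumes r: "r \<in> pos_dens M" and u: "u \<in> orlicz M Phi r" and v: "v \<in> orlicz M Phi r"
  shows "(\<lambda>x. u x + v x) \<in> orlicz M Phi r"
proof -
  obtain a b where "a \<in> lux_radii M r u" "b \<in> lux_radii M r v" using orlicz_radii_nonempty[OF r] u v by blast
  then have "a + b \<in> lux_radii M r (\<lambda>x. u x + v x)"
    using lux_radii_add pos_dens_measurable[OF r] orlicz_measurable u v by blast
  then show ?thesis using orlicz_Phi_iff_radii[OF pos_dens_measurable[OF r]] orlicz_measurable[OF u] orlicz_measurable[OF v] by auto
qed

lemma orlicz_scale:
  assumes r: "r \<in> pos_dens M" and u: "u \<in> orlicz M Phi r"
  shows "(\<lambda>x. t * u x) \<in> orlicz M Phi r"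
proof (cases "t = 0")
  case True
  then show ?thesis using orlicz_const[OF r, of 0] by simp
next
  case False
  obtain a where "a \<in> lux_radii M r u" using orlicz_radii_nonempty[OF r] u by blast
  then have "\<bar>t\<bar> * a \<in> lux_radii M r (\<lambda>x. t * u x)" using lux_radii_scale False by blast
  then show ?thesis using orlicz_Phi_iff_radii[OF pos_dens_measurable[OF r]] orlicz_measurable[OF u] by auto
qed

lemma orlicz_lin:
  assumes r: "r \<in> pos_dens M" and u: "u \<in> orlicz M Phi r" and v: "v \<in> orlicz M Phi r"
  shows "(\<lambda>x. a * u x + b * v x) \<in> orlicz M Phi r"
  using orlicz_add[OF r orlicz_scale[OF r u] orlicz_scale[OF r v]] .

lemma orlicz_diff:
  assumes r: "r \<in> pos_dens M" and u: "u \<in> orlicz M Phi r" and v: "v \<in> orlicz M Phi r"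
  shows "(\<lambda>x. u x - v x) \<in> orlicz M Phi r"
  using orlicz_lin[OF r u v, of 1 "-1"] by simp

lemma lux_radii_cong_AE: "AE x in M. u x = v x \<Longrightarrow> lux_radii M r u = lux_radii M r v"
proof -
  assume "AE x in M. u x = v x"
  then have "(\<integral>\<^sup>+x. ennreal (r x * Phi (u x / c)) \<partial>M) = (\<integral>\<^sup>+x. ennreal (r x * Phi (v x / c)) \<partial>M)" for c
    by (intro nn_integral_cong_AE) (auto elim: AE_mp)
  then show ?thesis by (simp add: lux_radii_def)
qed

lemma orlicz_cong_AE:
  assumes r: "r \<in> pos_dens M" and u: "u \<in> orlicz M Phi r"
    and v: "v \<in> borel_measurable M" and e: "AE x in M. u x = v x"
  shows "v \<in> orlicz M Phi r"
  using orlicz_Phi_iff_radii[OF pos_dens_measurable[OF r]] u v lux_radii_cong_AE[OF e] by auto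

lemma nn_integral_density_le_radius:
  assumes r: "r \<in> pos_dens M" and u: "u \<in> borel_measurable M" and c: "c \<in> lux_radii M r u"
    and K: "0 \<le> K" and h: "\<And>x. h x \<le> K * Phi (u x / c) + K"
  shows "(\<integral>\<^sup>+x. ennreal (r x * h x) \<partial>M) \<le> ennreal (2 * K)"
proof -
  note [measurable] = pos_dens_measurable[OF r] u
  have "(\<integral>\<^sup>+x. ennreal (r x * h x) \<partial>M) \<le>
      (\<integral>\<^sup>+x. ennreal K * ennreal (r x * Phi (u x / c)) + ennreal K * ennreal (r x * 1) \<partial>M)"
  proof (rule nn_integral_mono_AE)
    show "AE x in M. ennreal (r x * h x) \<le> ennreal K * ennreal (r x * Phi (u x / c)) + ennreal K * ennreal (r x * 1)"
      using pos_dens_AE_nonneg[OF r]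
    proof (rule AE_mp, intro AE_I2 impI)
      fix x assume "0 \<le> r x"
      then have "ennreal (r x * h x) \<le> ennreal (r x * (K * Phi (u x / c) + K * 1))"
        using h[of x] by (intro ennreal_leI mult_left_mono) auto
      also have "\<dots> \<le> ennreal K * ennreal (r x * Phi (u x / c)) + ennreal K * ennreal (r x * 1)"
        using K by (intro ennreal_mult_combination_le Phi_nonneg) auto
      finally show "ennreal (r x * h x) \<le> ennreal K * ennreal (r x * Phi (u x / c)) + ennreal K * ennreal (r x * 1)" .
    qed
  qed
  also have "\<dots> = ennreal K * (\<integral>\<^sup>+x. ennreal (r x * Phi (u x / c)) \<partial>M) + ennreal K * (\<integral>\<^sup>+x. ennreal (r x) \<partial>M)"
    by (subst nn_integral_add) (auto simp: nn_integral_cmult)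
  also have "\<dots> \<le> ennreal K * 1 + ennreal K * 1"
    using c pos_dens_nn_integral[OF r] by (intro add_mono mult_left_mono) (auto simp: lux_radii_def)
  also have "\<dots> = ennreal (2 * K)" using K by (simp add: ennreal_plus[symmetric] del: ennreal_plus)
  finally show ?thesis .
qed

lemma nn_integral_exp_le_4:
  assumes "r \<in> pos_dens M" "u \<in> borel_measurable M" "c \<in> lux_radii M r u"
  shows "(\<integral>\<^sup>+x. ennreal (r x * exp (u x / c)) \<partial>M) \<le> 4"
  using nn_integral_density_le_radius[OF assms, of 2 "\<lambda>x. exp (u x / c)"] exp_le_Phi by simp

lemma nn_integral_abs_le:
  assumes "r \<in> pos_dens M" "u \<in> borel_measurable M" and c: "c \<in> lux_radii M r u"
  shows "(\<integral>\<^sup>+x. ennreal (r x * \<bar>u x\<bar>) \<partial>M) \<le> ennreal (4 * c)"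
proof -
  have c0: "c > 0" using c lux_radii_pos by blast
  have "\<bar>u x\<bar> \<le> 2 * c * Phi (u x / c) + 2 * c" for x
    using mult_left_mono[OF abs_le_Phi[of "u x / c"], of c] c0 by (simp add: abs_div algebra_simps)
  then show ?thesis using nn_integral_density_le_radius[OF assms, of "2 * c"] c0 by simp
qed

lemma orlicz_integrable:
  assumes r: "r \<in> pos_dens M" and u: "u \<in> orlicz M Phi r"
  shows "integrable M (\<lambda>x. r x * u x)"
proof (rule integrableI_bounded)
  show "(\<lambda>x. r x * u x) \<in> borel_measurable M" using pos_dens_measurable[OF r] orlicz_measurable[OF u] by simp
  have "(\<integral>\<^sup>+x. ennreal (norm (r x * u x)) \<partial>M) = (\<integral>\<^sup>+x. ennreal (r x * \<bar>u x\<bar>) \<partial>M)"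
    using pos_dens_AE_nonneg[OF r] by (intro nn_integral_cong_AE) (auto elim!: AE_mp simp: abs_mult)
  also obtain c where "c \<in> lux_radii M r u" using orlicz_radii_nonempty[OF r u] by blast
  then have "(\<integral>\<^sup>+x. ennreal (r x * \<bar>u x\<bar>) \<partial>M) \<le> ennreal (4 * c)" by (rule nn_integral_abs_le[OF r orlicz_measurable[OF u]])
  finally show "(\<integral>\<^sup>+x. ennreal (norm (r x * u x)) \<partial>M) < \<infinity>" by (simp add: le_less_trans)
qed

lemma Ep_abs_le_radius:
  assumes r: "r \<in> pos_dens M" and u: "u \<in> orlicz M Phi r" and c: "c \<in> lux_radii M r u"
  shows "\<bar>Ep M r u\<bar> \<le> 4 * c"
proof -
  have "(\<integral>\<^sup>+x. ennreal \<bar>r x * u x\<bar> \<partial>M) = (\<integral>\<^sup>+x. ennreal (r x * \<bar>u x\<bar>) \<partial>M)"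
    using pos_dens_AE_nonneg[OF r] by (intro nn_integral_cong_AE) (auto elim!: AE_mp simp: abs_mult)
  also have "\<dots> \<le> ennreal (4 * c)" by (rule nn_integral_abs_le[OF r orlicz_measurable[OF u] c])
  finally have "(\<integral>x. \<bar>r x * u x\<bar> \<partial>M) \<le> 4 * c" using lux_radii_pos[OF c] by (intro integral_real_bounded) auto
  then show ?thesis unfolding Ep_def using integral_abs_bound[of M "\<lambda>x. r x * u x"] by linarith
qed

lemma Ep_abs_le_lux_norm:
  assumes r: "r \<in> pos_dens M" and u: "u \<in> orlicz M Phi r"
  shows "\<bar>Ep M r u\<bar> \<le> 4 * lux_norm M r u"
proof (rule field_le_epsilon)
  fix e :: real assume e: "0 < e"
  have "lux_norm M r u + e / 4 \<in> lux_radii M r u" using lux_radii_gt_norm[OF orlicz_radii_nonempty[OF r u]] e by simp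
  then have "\<bar>Ep M r u\<bar> \<le> 4 * (lux_norm M r u + e / 4)" by (rule Ep_abs_le_radius[OF r u])
  then show "\<bar>Ep M r u\<bar> \<le> 4 * lux_norm M r u + e" by (simp add: algebra_simps)
qed

lemma Ep_const:
  assumes r: "r \<in> pos_dens M"
  shows "Ep M r (\<lambda>_. k) = k"
  using r by (simp add: Ep_def pos_dens_def)

lemma Ep_lin:
  assumes r: "r \<in> pos_dens M" and u: "u \<in> orlicz M Phi r" and v: "v \<in> orlicz M Phi r"
  shows "Ep M r (\<lambda>x. a * u x + b * v x) = a * Ep M r u + b * Ep M r v"
proof -
  have "(\<lambda>x. r x * (a * u x + b * v x)) = (\<lambda>x. a * (r x * u x) + b * (r x * v x))" by (simp add: algebra_simps)
  moreover have "(\<integral>x. a * (r x * u x) + b * (r x * v x) \<partial>M) = a * (\<integral>x. r x * u x \<partial>M) + b * (\<integral>x. r x * v x \<partial>M)"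
    using orlicz_integrable[OF r u] orlicz_integrable[OF r v] by simp
  ultimately show ?thesis by (simp add: Ep_def)
qed

lemma Ep_diff_const:
  assumes r: "r \<in> pos_dens M" and u: "u \<in> orlicz M Phi r"
  shows "Ep M r (\<lambda>x. u x - k) = Ep M r u - k"
proof -
  have "Ep M r (\<lambda>x. 1 * u x + (-k) * (\<lambda>_. 1) x) = 1 * Ep M r u + (-k) * Ep M r (\<lambda>_. 1)"
    by (rule Ep_lin[OF r u orlicz_const[OF r]])
  then show ?thesis using Ep_const[OF r, of 1] by simp
qed

lemma Bsp_centered:
  assumes r: "r \<in> pos_dens M" and u: "u \<in> orlicz M Phi r"
  shows "(\<lambda>x. u x - Ep M r u) \<in> Bsp M r"
  unfolding Bsp_def using Ep_diff_const[OF r u] orlicz_diff[OF r u orlicz_const[OF r]] by simp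

lemma Bsp_orlicz: "u \<in> Bsp M r \<Longrightarrow> u \<in> orlicz M Phi r" by (simp add: Bsp_def)

lemma Bsp_lin:
  assumes r: "r \<in> pos_dens M" and u: "u \<in> Bsp M r" and v: "v \<in> Bsp M r"
  shows "(\<lambda>x. a * u x + b * v x) \<in> Bsp M r"
  using Ep_lin[OF r Bsp_orlicz[OF u] Bsp_orlicz[OF v]] orlicz_lin[OF r Bsp_orlicz[OF u] Bsp_orlicz[OF v]] u v
  by (simp add: Bsp_def)

lemma Bsp_add: "r \<in> pos_dens M \<Longrightarrow> u \<in> Bsp M r \<Longrightarrow> v \<in> Bsp M r \<Longrightarrow> (\<lambda>x. u x + v x) \<in> Bsp M r"
  using Bsp_lin[of r M u v 1 1] by simp

lemma Bsp_diff: "r \<in> pos_dens M \<Longrightarrow> u \<in> Bsp M r \<Longrightarrow> v \<in> Bsp M r \<Longrightarrow> (\<lambda>x. u x - v x) \<in> Bsp M r"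
  using Bsp_lin[of r M u v 1 "-1"] by simp

lemma Bsp_scale: "r \<in> pos_dens M \<Longrightarrow> u \<in> Bsp M r \<Longrightarrow> (\<lambda>x. t * u x) \<in> Bsp M r"
  using Bsp_lin[of r M u u t 0] by simp

lemma lux_norm_triangle: "r \<in> pos_dens M \<Longrightarrow> u \<in> orlicz M Phi r \<Longrightarrow> v \<in> orlicz M Phi r \<Longrightarrow>
  lux_norm M r (\<lambda>x. u x + v x) \<le> lux_norm M r u + lux_norm M r v"
  by (rule lux_norm_triangle_radii[OF pos_dens_measurable orlicz_measurable orlicz_measurable orlicz_radii_nonempty orlicz_radii_nonempty])

lemma lux_norm_scale_le: "r \<in> pos_dens M \<Longrightarrow> u \<in> orlicz M Phi r \<Longrightarrow>
  lux_norm M r (\<lambda>x. t * u x) \<le> \<bar>t\<bar> * lux_norm M r u"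
  by (rule lux_norm_scale_radii[OF orlicz_radii_nonempty])

lemma lux_norm_nonneg: "r \<in> pos_dens M \<Longrightarrow> u \<in> orlicz M Phi r \<Longrightarrow> 0 \<le> lux_norm M r u"
  by (rule lux_norm_nonneg_radii[OF orlicz_radii_nonempty])

lemma lux_norm_centered_le:
  assumes r: "r \<in> pos_dens M" and u: "u \<in> orlicz M Phi r"
  shows "lux_norm M r (\<lambda>x. u x - Ep M r u) \<le> (1 + 4 * lux_norm M r (\<lambda>_. 1)) * lux_norm M r u"
proof -
  have "lux_norm M r (\<lambda>x. u x + (\<lambda>_. - Ep M r u) x) \<le> lux_norm M r u + lux_norm M r (\<lambda>_. - Ep M r u)"
    by (rule lux_norm_triangle[OF r u orlicz_const[OF r]])
  also have "lux_norm M r (\<lambda>_. - Ep M r u) \<le> \<bar>Ep M r u\<bar> * lux_norm M r (\<lambda>_. 1)"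
    using lux_norm_scale_le[OF r orlicz_const[OF r], of "- Ep M r u" 1] by simp
  also have "\<dots> \<le> (4 * lux_norm M r u) * lux_norm M r (\<lambda>_. 1)"
    using Ep_abs_le_lux_norm[OF r u] lux_norm_nonneg[OF r orlicz_const[OF r]] by (rule mult_right_mono)
  finally show ?thesis by (simp add: algebra_simps)
qed

lemma lux_norm_zero_le: "lux_norm M r (\<lambda>x. 0) \<le> 0"
  by (rule lux_norm_leI) (simp add: lux_radii_def)

lemma nn_integral_exp_finite:
  assumes r: "r \<in> pos_dens M" and u: "u \<in> orlicz M Phi r" and l: "lux_norm M r u < 1"
  shows "(\<integral>\<^sup>+x. ennreal (r x * exp (u x)) \<partial>M) < \<infinity>"
proof -
  have "1 \<in> lux_radii M r u" using lux_radii_gt_norm[OF orlicz_radii_nonempty[OF r u] l] .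
  then have "(\<integral>\<^sup>+x. ennreal (r x * exp (u x / 1)) \<partial>M) \<le> 4" by (rule nn_integral_exp_le_4[OF r orlicz_measurable[OF u]])
  then show ?thesis by (simp add: le_less_trans)
qed

lemma Sp_Bsp: "u \<in> Sp M r \<Longrightarrow> u \<in> Bsp M r" by (simp add: Sp_def)

lemma Sp_measurable: "a \<in> Sp M p \<Longrightarrow> a \<in> borel_measurable M"
  by (simp add: Sp_def Bsp_def orlicz_def)

lemma Sp_dom_K:
  assumes "u \<in> Sp M r"
  shows "u \<in> dom_K M r"
proof -
  obtain e where e: "e > 0" "\<forall>v\<in>Bsp M r. lux_norm M r (\<lambda>x. v x - u x) < e \<longrightarrow> v \<in> dom_K M r"
    using assms by (auto simp: Sp_def)
  have "lux_norm M r (\<lambda>x. u x - u x) < e" using lux_norm_zero_le[of M r] e by simp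
  then show ?thesis using e Sp_Bsp[OF assms] by blast
qed

lemma Sp_ball:
  assumes r: "r \<in> pos_dens M" and u: "u \<in> Sp M r"
  shows "\<exists>e>0. \<forall>h\<in>Bsp M r. lux_norm M r h < e \<longrightarrow> (\<lambda>x. u x + h x) \<in> Sp M r"
proof -
  obtain e where e: "e > 0" "\<forall>v\<in>Bsp M r. lux_norm M r (\<lambda>x. v x - u x) < e \<longrightarrow> v \<in> dom_K M r"
    using u by (auto simp: Sp_def)
  have uB: "u \<in> Bsp M r" by (rule Sp_Bsp[OF u])
  show ?thesis
  proof (intro exI[of _ "e/2"] conjI ballI impI)
    show "e / 2 > 0" using e by simp
    fix h assume h: "h \<in> Bsp M r" and hl: "lux_norm M r h < e / 2"
    have uh: "(\<lambda>x. u x + h x) \<in> Bsp M r" by (rule Bsp_add[OF r uB h])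
    show "(\<lambda>x. u x + h x) \<in> Sp M r" unfolding Sp_def
    proof (intro CollectI conjI exI[of _ "e/2"] ballI impI)
      show "(\<lambda>x. u x + h x) \<in> Bsp M r" by (rule uh)
      show "e / 2 > 0" using e by simp
      fix v assume v: "v \<in> Bsp M r" and vl: "lux_norm M r (\<lambda>x. v x - (u x + h x)) < e / 2"
      have d: "(\<lambda>x. v x - (u x + h x)) \<in> orlicz M Phi r" using Bsp_orlicz[OF Bsp_diff[OF r v uh]] .
      have "lux_norm M r (\<lambda>x. (v x - (u x + h x)) + h x) \<le> lux_norm M r (\<lambda>x. v x - (u x + h x)) + lux_norm M r h"
        by (rule lux_norm_triangle[OF r d Bsp_orlicz[OF h]])
      moreover have "(\<lambda>x. (v x - (u x + h x)) + h x) = (\<lambda>x. v x - u x)" by simp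
      ultimately have "lux_norm M r (\<lambda>x. v x - u x) < e" using vl hl by simp
      then show "v \<in> dom_K M r" using e v by blast
    qed
  qed
qed

section \<open>Exponential densities\<close>

lemma exp_density_integral:
  assumes p: "p \<in> pos_dens M" and f: "f \<in> borel_measurable M"
    and fin: "(\<integral>\<^sup>+x. ennreal (p x * exp (f x)) \<partial>M) < \<infinity>"
  shows "integrable M (\<lambda>x. p x * exp (f x))" "(\<integral>x. p x * exp (f x) \<partial>M) > 0"
proof -
  show i: "integrable M (\<lambda>x. p x * exp (f x))"
    by (rule integrable_density_nonneg[OF p _ _ fin]) (use f in simp_all)
  have nn: "AE x in M. 0 \<le> p x * exp (f x)" using pos_dens_AE_nonneg[OF p] by (auto elim!: AE_mp)
  have ge: "(\<integral>x. p x * exp (f x) \<partial>M) \<ge> 0" using nn by (rule integral_nonneg_AE)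
  show "(\<integral>x. p x * exp (f x) \<partial>M) > 0"
  proof (rule ccontr)
    assume "\<not> ?thesis"
    then have "(\<integral>x. p x * exp (f x) \<partial>M) = 0" using ge by simp
    then have "AE x in M. p x * exp (f x) = 0" using integral_nonneg_eq_0_iff_AE[OF i nn] by simp
    then have "AE x in M. p x = 0" by (auto elim!: AE_mp)
    then have "(\<integral>x. p x \<partial>M) = (\<integral>x. 0 \<partial>M)"
      using pos_dens_measurable[OF p] by (intro integral_cong_AE) auto
    then show False using p by (simp add: pos_dens_def)
  qed
qed

lemma dom_K_measurable: "a \<in> dom_K M p \<Longrightarrow> a \<in> borel_measurable M"
  by (simp add: dom_K_def Bsp_def orlicz_def)

lemma dom_K_finite: "a \<in> dom_K M p \<Longrightarrow> (\<integral>\<^sup>+x. ennreal (p x * exp (a x)) \<partial>M) < \<infinity>"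
  by (simp add: dom_K_def)

lemma e_p_pos_dens:
  assumes p: "p \<in> pos_dens M" and a: "a \<in> dom_K M p"
  shows "e_p M p a \<in> pos_dens M"
proof -
  note pm[measurable] = pos_dens_measurable[OF p]
  note am[measurable] = dom_K_measurable[OF a]
  define Z where "Z = (\<integral>x. p x * exp (a x) \<partial>M)"
  have i: "integrable M (\<lambda>x. p x * exp (a x))" and Z0: "Z > 0"
    using exp_density_integral[OF p am dom_K_finite[OF a]] by (auto simp: Z_def)
  have K: "Kp M p a = ln Z" by (simp add: Kp_def Z_def)
  have e: "e_p M p a = (\<lambda>x. (1 / Z) * (p x * exp (a x)))"
    using Z0 by (auto simp: e_p_def K exp_diff)
  show ?thesis unfolding pos_dens_def
  proof (intro CollectI conjI)
    show "e_p M p a \<in> borel_measurable M" unfolding e by simp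
    show "AE x in M. e_p M p a x > 0" unfolding e using pos_dens_AE_pos[OF p] Z0 by (auto elim!: AE_mp)
    show "integrable M (e_p M p a)" unfolding e using i by simp
    show "(\<integral>x. e_p M p a x \<partial>M) = 1" unfolding e using Z0 by (simp add: Z_def[symmetric])
  qed
qed

lemma nn_integral_exp_shift:
  assumes pm: "p \<in> borel_measurable M" and G: "G \<in> borel_measurable M"
    and e: "AE x in M. F x = G x + c"
  shows "(\<integral>\<^sup>+x. ennreal (p x * exp (F x)) \<partial>M) = ennreal (exp c) * (\<integral>\<^sup>+x. ennreal (p x * exp (G x)) \<partial>M)"
proof -
  have "(\<integral>\<^sup>+x. ennreal (p x * exp (F x)) \<partial>M) = (\<integral>\<^sup>+x. ennreal (exp c) * ennreal (p x * exp (G x)) \<partial>M)"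
  proof (rule nn_integral_cong_AE)
    show "AE x in M. ennreal (p x * exp (F x)) = ennreal (exp c) * ennreal (p x * exp (G x))"
      using e
    proof (rule AE_mp, intro AE_I2 impI)
      fix x assume "F x = G x + c"
      then have h: "p x * exp (F x) = exp c * (p x * exp (G x))" by (simp add: exp_add)
      show "ennreal (p x * exp (F x)) = ennreal (exp c) * ennreal (p x * exp (G x))"
        unfolding h by (rule ennreal_mult') simp
    qed
  qed
  also have "\<dots> = ennreal (exp c) * (\<integral>\<^sup>+x. ennreal (p x * exp (G x)) \<partial>M)"
    using pm G by (intro nn_integral_cmult) simp
  finally show ?thesis .
qed

lemma nn_integral_exp_shift_finite:
  assumes pm: "p \<in> borel_measurable M" and G: "G \<in> borel_measurable M"
    and e: "AE x in M. F x = G x + c" and fin: "(\<integral>\<^sup>+x. ennreal (p x * exp (G x)) \<partial>M) < \<infinity>"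
  shows "(\<integral>\<^sup>+x. ennreal (p x * exp (F x)) \<partial>M) < \<infinity>"
  unfolding nn_integral_exp_shift[OF pm G e] using fin by (simp add: ennreal_mult_less_top)

lemma Kp_shift:
  assumes p: "p \<in> pos_dens M" and G: "G \<in> borel_measurable M"
    and F: "F \<in> borel_measurable M"
    and e: "AE x in M. F x = G x + c" and fin: "(\<integral>\<^sup>+x. ennreal (p x * exp (G x)) \<partial>M) < \<infinity>"
  shows "Kp M p F = c + Kp M p G"
proof -
  have Z: "(\<integral>x. p x * exp (G x) \<partial>M) > 0" by (rule exp_density_integral(2)[OF p G fin])
  note [measurable] = pos_dens_measurable[OF p] G F
  have "(\<integral>x. p x * exp (F x) \<partial>M) = (\<integral>x. exp c * (p x * exp (G x)) \<partial>M)"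
  proof (rule integral_cong_AE)
    show "(\<lambda>x. p x * exp (F x)) \<in> borel_measurable M" by measurable
    show "(\<lambda>x. exp c * (p x * exp (G x))) \<in> borel_measurable M" by measurable
    show "AE x in M. p x * exp (F x) = exp c * (p x * exp (G x))"
      using e by (auto elim!: AE_mp simp: exp_add)
  qed
  also have "\<dots> = exp c * (\<integral>x. p x * exp (G x) \<partial>M)" by simp
  finally show ?thesis using Z by (simp add: Kp_def ln_mult)
qed

lemma e_p_shift_AE:
  assumes p: "p \<in> pos_dens M" and G: "G \<in> borel_measurable M"
    and F: "F \<in> borel_measurable M"
    and e: "AE x in M. F x = G x + c" and fin: "(\<integral>\<^sup>+x. ennreal (p x * exp (G x)) \<partial>M) < \<infinity>"
  shows "AE x in M. e_p M p F x = e_p M p G x"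
  using e by (rule AE_mp) (auto simp: e_p_def Kp_shift[OF p G F e fin])

lemma e_p_e_p:
  assumes p: "p \<in> pos_dens M" and a: "a \<in> borel_measurable M" and v: "v \<in> borel_measurable M"
    and fin: "(\<integral>\<^sup>+x. ennreal (p x * exp (a x + v x)) \<partial>M) < \<infinity>"
  shows "e_p M (e_p M p a) v = e_p M p (\<lambda>x. a x + v x)"
proof -
  define Ka where "Ka = Kp M p a"
  have Z: "(\<integral>x. p x * exp (a x + v x) \<partial>M) > 0" using exp_density_integral(2)[OF p _ fin] a v by simp
  have "(\<lambda>x. e_p M p a x * exp (v x)) = (\<lambda>x. exp (- Ka) * (p x * exp (a x + v x)))"
    by (auto simp: e_p_def Ka_def exp_add[symmetric] algebra_simps)
  then have "Kp M (e_p M p a) v = - Ka + Kp M p (\<lambda>x. a x + v x)"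
    using Z by (simp add: Kp_def ln_mult)
  then show ?thesis
    by (auto simp: e_p_def Ka_def[symmetric] exp_add[symmetric] algebra_simps)
qed

section \<open>Equivalence of the Orlicz spaces of \<open>p\<close> and \<open>e\<^sub>p a\<close>\<close>

lemma exp_mult_le:
  fixes m :: nat
  assumes m: "m \<ge> 1" and z: "z \<ge> 0"
  shows "exp f * z \<le> exp (f * (1 + 1 / m)) + z ^ (m + 1)"
proof (cases "z \<le> exp (f / m)")
  case True
  have "exp f * z \<le> exp f * exp (f / m)" using True by (intro mult_left_mono) auto
  also have "\<dots> = exp (f * (1 + 1 / m))" by (simp add: exp_add[symmetric] algebra_simps)
  finally show ?thesis using z by (simp add: add_increasing2)
next
  case False
  then have zg: "z > exp (f / m)" by simp
  have "exp f = exp (f / m) ^ m" using m by (simp add: exp_of_nat_mult[symmetric])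
  also have "\<dots> < z ^ m" using zg m by (intro power_strict_mono) auto
  finally have "exp f * z \<le> z ^ m * z" using z by (intro mult_right_mono) auto
  also have "\<dots> = z ^ (m + 1)" by simp
  finally show ?thesis by (simp add: add_increasing)
qed

lemma exp_mult_Phi_le:
  assumes n: "n \<ge> 1" and K: "0 \<le> K"
  shows "exp f * Phi (y / (2 ^ n * (K + 1))) \<le> (exp (f * (1 + 1 / (2 ^ n - 1))) + Phi y) / (K + 1)"
proof -
  define m :: nat where "m = 2 ^ n - 1"
  have "(2::nat) ^ 1 \<le> 2 ^ n" using n by (intro power_increasing) auto
  then have m: "m \<ge> 1" "m + 1 = 2 ^ n" "real m = 2 ^ n - 1" by (auto simp: m_def of_nat_diff)
  define z where "z = Phi (y / 2 ^ n)"
  have "Phi (y / (2 ^ n * (K + 1))) \<le> z / (K + 1)"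
    using Phi_scale_le[of "1 / (K + 1)" "y / 2 ^ n"] K by (simp add: z_def ac_simps)
  then have "exp f * Phi (y / (2 ^ n * (K + 1))) \<le> exp f * z / (K + 1)"
    using mult_left_mono[of _ _ "exp f"] by fastforce
  also have "\<dots> \<le> (exp (f * (1 + 1 / m)) + Phi y) / (K + 1)"
  proof -
    have "z ^ (m + 1) \<le> Phi y" using Phi_power_le[of "y / 2 ^ n" n] m(2) by (simp add: z_def)
    then have "exp f * z \<le> exp (f * (1 + 1 / m)) + Phi y"
      using exp_mult_le[OF m(1), of z f] Phi_nonneg by (simp add: z_def)
    then show ?thesis using K by (simp add: divide_right_mono)
  qed
  finally show ?thesis using m(3) by simp
qed

lemma lux_radii_exp_density:
  assumes P: "P \<in> pos_dens M" and [measurable]: "f \<in> borel_measurable M" "g \<in> borel_measurable M"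
    and n: "n \<ge> 1" and K: "0 \<le> K"
    and A: "(\<integral>\<^sup>+x. ennreal (P x * exp (f x * (1 + 1 / (2 ^ n - 1)))) \<partial>M) \<le> ennreal K"
    and l: "l \<in> lux_radii M P g"
  shows "2 ^ n * (K + 1) * l \<in> lux_radii M (\<lambda>x. P x * exp (f x)) g"
proof -
  define s where "s = 1 / (K + 1)"
  have s: "0 \<le> s" "s * (K + 1) = 1" using K by (auto simp: s_def)
  have l0: "l > 0" using l lux_radii_pos by blast
  note [measurable] = pos_dens_measurable[OF P]
  have pt: "ennreal (P x * exp (f x) * Phi (g x / (2 ^ n * (K + 1) * l))) \<le>
      ennreal s * ennreal (P x * exp (f x * (1 + 1 / (2 ^ n - 1)))) + ennreal s * ennreal (P x * Phi (g x / l))" for x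
  proof -
    have "exp (f x) * Phi (g x / (2 ^ n * (K + 1) * l)) \<le> s * exp (f x * (1 + 1 / (2 ^ n - 1))) + s * Phi (g x / l)"
      using exp_mult_Phi_le[OF n K, of "f x" "g x / l"] by (simp add: s_def add_divide_distrib ac_simps)
    then have "ennreal (P x * (exp (f x) * Phi (g x / (2 ^ n * (K + 1) * l))))
        \<le> ennreal (P x * (s * exp (f x * (1 + 1 / (2 ^ n - 1))) + s * Phi (g x / l)))"
      by (intro ennreal_mult_left_mono_nonneg) (simp add: Phi_nonneg)
    also have "\<dots> \<le> ennreal s * ennreal (P x * exp (f x * (1 + 1 / (2 ^ n - 1)))) + ennreal s * ennreal (P x * Phi (g x / l))"
      using s by (intro ennreal_mult_combination_le Phi_nonneg) auto
    finally show ?thesis by (simp add: mult.assoc)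
  qed
  have "(\<integral>\<^sup>+x. ennreal (P x * exp (f x) * Phi (g x / (2 ^ n * (K + 1) * l))) \<partial>M) \<le>
      (\<integral>\<^sup>+x. ennreal s * ennreal (P x * exp (f x * (1 + 1 / (2 ^ n - 1)))) + ennreal s * ennreal (P x * Phi (g x / l)) \<partial>M)"
    by (rule nn_integral_mono) (rule pt)
  also have "\<dots> = ennreal s * (\<integral>\<^sup>+x. ennreal (P x * exp (f x * (1 + 1 / (2 ^ n - 1)))) \<partial>M)
      + ennreal s * (\<integral>\<^sup>+x. ennreal (P x * Phi (g x / l)) \<partial>M)"
    by (subst nn_integral_add) (auto simp: nn_integral_cmult)
  also have "\<dots> \<le> ennreal s * ennreal K + ennreal s * 1"
    using A l by (intro add_mono mult_left_mono) (auto simp: lux_radii_def)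
  also have "\<dots> = 1" using s K by (simp add: ennreal_mult[symmetric] ennreal_plus[symmetric] distrib_left del: ennreal_plus)
  finally show ?thesis using l0 K by (simp add: lux_radii_def)
qed

lemma orlicz_embedding_exp_density:
  assumes P: "P \<in> pos_dens M" and f: "f \<in> borel_measurable M" and n: "n \<ge> 1"
    and R: "\<And>x. R x = P x * exp (f x)"
    and A: "(\<integral>\<^sup>+x. ennreal (P x * exp (f x * (1 + 1 / ((2::real) ^ n - 1)))) \<partial>M) < \<infinity>"
  shows "\<exists>C>0. \<forall>g\<in>orlicz M Phi P. g \<in> orlicz M Phi R \<and> lux_norm M R g \<le> C * lux_norm M P g"
proof -
  obtain K where K: "0 \<le> K" "(\<integral>\<^sup>+x. ennreal (P x * exp (f x * (1 + 1 / ((2::real) ^ n - 1)))) \<partial>M) \<le> ennreal K"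
    using A by (cases "\<integral>\<^sup>+x. ennreal (P x * exp (f x * (1 + 1 / ((2::real) ^ n - 1)))) \<partial>M") auto
  have R_eq: "R = (\<lambda>x. P x * exp (f x))" using R by auto
  have Rm: "R \<in> borel_measurable M" unfolding R_eq using pos_dens_measurable[OF P] f by measurable
  show ?thesis
  proof (intro exI[of _ "2 ^ n * (K + 1)"] conjI ballI)
    show "2 ^ n * (K + 1) > (0::real)" using K by simp
    fix g assume g: "g \<in> orlicz M Phi P"
    note radii = lux_radii_exp_density[OF P f orlicz_measurable[OF g] n K(1,2), folded R_eq]
    show "g \<in> orlicz M Phi R"
      using orlicz_Phi_iff_radii[OF Rm] radii orlicz_radii_nonempty[OF P g] orlicz_measurable[OF g] by blast
    show "lux_norm M R g \<le> 2 ^ n * (K + 1) * lux_norm M P g"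
      using K by (intro lux_norm_le_mult[OF orlicz_radii_nonempty[OF P g]] radii) auto
  qed
qed

lemma exists_pow2_divide_less:
  assumes L: "L \<ge> 0" and d: "d > 0"
  shows "\<exists>n\<ge>1. L / ((2::real)^n - 1) < d"
proof -
  obtain N :: nat where N: "L / d < N" using reals_Archimedean2 by blast
  define n where "n = N + 1"
  have "n < 2^n" by (rule less_exp)
  then have "real n < 2^n" by (metis of_nat_less_iff of_nat_numeral of_nat_power)
  then have g: "(2::real)^n - 1 > N" by (simp add: n_def)
  have N0: "real N \<ge> 0" by simp
  have pos: "(2::real)^n - 1 > 0" using g N0 by linarith
  have "L < d * N" using N d by (simp add: field_simps)
  also have "\<dots> \<le> d * ((2::real)^n - 1)" using g d by (intro mult_left_mono) auto
  finally have "L / ((2::real)^n - 1) < d" using pos by (simp add: field_simps)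
  then show ?thesis using n_def by (intro exI[of _ n]) auto
qed

text \<open>Both embeddings are instances of \<open>orlicz_embedding_exp_density\<close>: \<open>e\<^sub>p a = p exp (a - K\<^sub>p a)\<close>
  needs \<open>p exp ((1 + t) a)\<close> integrable, which holds since \<open>a + t a \<in> S\<^sub>p\<close> for small \<open>t\<close>; conversely
  \<open>p = e\<^sub>p a exp (K\<^sub>p a - a)\<close> needs \<open>p exp (- t a)\<close> integrable, which holds once \<open>t \<parallel>a\<parallel> < 1\<close>.\<close>

lemma orlicz_embedding_into_e_p:
  assumes p: "p \<in> pos_dens M" and a: "a \<in> Sp M p"
  shows "\<exists>C>0. \<forall>g\<in>orlicz M Phi p. g \<in> orlicz M Phi (e_p M p a) \<and> lux_norm M (e_p M p a) g \<le> C * lux_norm M p g"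
proof -
  note [measurable] = Sp_measurable[OF a] pos_dens_measurable[OF p]
  have ao: "a \<in> orlicz M Phi p" by (rule Bsp_orlicz[OF Sp_Bsp[OF a]])
  obtain e where e: "e > 0" "\<forall>h\<in>Bsp M p. lux_norm M p h < e \<longrightarrow> (\<lambda>x. a x + h x) \<in> Sp M p"
    using Sp_ball[OF p a] by blast
  obtain n where n: "n \<ge> 1" "lux_norm M p a / ((2::real) ^ n - 1) < e"
    using exists_pow2_divide_less[OF lux_norm_nonneg[OF p ao] e(1)] by blast
  define t where "t = 1 / ((2::real) ^ n - 1)"
  have "t > 0" using n(1) by (simp add: t_def one_less_power)
  then have "lux_norm M p (\<lambda>x. t * a x) < e"
    using lux_norm_scale_le[OF p ao, of t] n(2) by (simp add: t_def)
  then have "(\<lambda>x. a x + t * a x) \<in> Sp M p" using e Bsp_scale[OF p Sp_Bsp[OF a]] by blast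
  then have fin: "(\<integral>\<^sup>+x. ennreal (p x * exp (a x + t * a x)) \<partial>M) < \<infinity>"
    by (rule dom_K_finite[OF Sp_dom_K])
  have shift: "AE x in M. (a x - Kp M p a) * (1 + t) = (a x + t * a x) + (- Kp M p a * (1 + t))"
    by (simp add: algebra_simps)
  have "(\<integral>\<^sup>+x. ennreal (p x * exp ((a x - Kp M p a) * (1 + t))) \<partial>M) < \<infinity>"
    by (rule nn_integral_exp_shift_finite[OF _ _ shift fin]) simp_all
  moreover have "e_p M p a x = p x * exp (a x - Kp M p a)" for x by (simp add: e_p_def)
  ultimately show ?thesis unfolding t_def
    by (intro orlicz_embedding_exp_density[OF p _ n(1), where f = "\<lambda>x. a x - Kp M p a"]) simp_all
qed

lemma orlicz_embedding_from_e_p: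
  assumes p: "p \<in> pos_dens M" and a: "a \<in> Sp M p"
  shows "\<exists>C>0. \<forall>g\<in>orlicz M Phi (e_p M p a). g \<in> orlicz M Phi p \<and> lux_norm M p g \<le> C * lux_norm M (e_p M p a) g"
proof -
  note [measurable] = Sp_measurable[OF a] pos_dens_measurable[OF p]
  have ao: "a \<in> orlicz M Phi p" by (rule Bsp_orlicz[OF Sp_Bsp[OF a]])
  define K where "K = Kp M p a"
  obtain n where n: "n \<ge> 1" "lux_norm M p a / ((2::real) ^ n - 1) < 1"
    using exists_pow2_divide_less[OF lux_norm_nonneg[OF p ao], of 1] by auto
  define t where "t = 1 / ((2::real) ^ n - 1)"
  have "t > 0" using n(1) by (simp add: t_def one_less_power)
  then have "lux_norm M p (\<lambda>x. (- t) * a x) \<le> t * lux_norm M p a"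
    using lux_norm_scale_le[OF p ao, of "- t"] by simp
  also have "\<dots> < 1" using n(2) by (simp add: t_def)
  finally have "lux_norm M p (\<lambda>x. (- t) * a x) < 1" .
  then have "(\<integral>\<^sup>+x. ennreal (p x * exp ((- t) * a x)) \<partial>M) < \<infinity>"
    by (rule nn_integral_exp_finite[OF p orlicz_scale[OF p ao]])
  moreover have "AE x in M. a x - K + (K - a x) * (1 + t) = (- t) * a x + K * t"
    by (simp add: algebra_simps)
  ultimately have "(\<integral>\<^sup>+x. ennreal (p x * exp (a x - K + (K - a x) * (1 + t))) \<partial>M) < \<infinity>"
    by (intro nn_integral_exp_shift_finite[OF _ _ _ \<open>_ < \<infinity>\<close>]) simp_all
  moreover have "p x * exp (a x - K + (K - a x) * (1 + t)) = e_p M p a x * exp ((K - a x) * (1 + t))" for x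
    by (simp add: e_p_def K_def exp_add)
  ultimately have "(\<integral>\<^sup>+x. ennreal (e_p M p a x * exp ((K - a x) * (1 + t))) \<partial>M) < \<infinity>" by simp
  moreover have "p x = e_p M p a x * exp (K - a x)" for x
    by (simp add: e_p_def K_def flip: exp_add)
  ultimately show ?thesis unfolding t_def
    by (intro orlicz_embedding_exp_density[OF e_p_pos_dens[OF p Sp_dom_K[OF a]] _ n(1),
          where f = "\<lambda>x. K - a x"]) simp_all
qed

section \<open>Change of chart\<close>

lemma ln_e_p_ratio_AE:
  assumes p: "p \<in> pos_dens M"
  shows "AE x in M. ln (e_p M p b x / e_p M p a x) = b x - a x + (Kp M p a - Kp M p b)"
  using pos_dens_AE_pos[OF p]
proof (rule AE_mp, intro AE_I2 impI)
  fix x assume "0 < p x"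
  then have "e_p M p b x / e_p M p a x = exp ((b x - Kp M p b) - (a x - Kp M p a))"
    by (simp add: e_p_def exp_diff)
  then show "ln (e_p M p b x / e_p M p a x) = b x - a x + (Kp M p a - Kp M p b)" by simp
qed

lemma orlicz_subset_e_p:
  assumes "p \<in> pos_dens M" "a \<in> Sp M p"
  shows "orlicz M Phi p \<subseteq> orlicz M Phi (e_p M p a)"
  using orlicz_embedding_into_e_p[OF assms] by blast

lemma orlicz_maxexp_subset:
  assumes "p \<in> pos_dens M" "q \<in> maxexp M p"
  shows "orlicz M Phi q \<subseteq> orlicz M Phi p"
  using assms orlicz_embedding_from_e_p by (fastforce simp: maxexp_def)

lemma orlicz_e_p_of_AE_diff:
  assumes p: "p \<in> pos_dens M" and a: "a \<in> Sp M p" and b: "b \<in> orlicz M Phi p"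
    and u: "u \<in> borel_measurable M" and diff: "AE x in M. u x = b x - a x + k"
  shows "u \<in> orlicz M Phi (e_p M p a)"
proof -
  have p1: "e_p M p a \<in> pos_dens M" by (rule e_p_pos_dens[OF p Sp_dom_K[OF a]])
  have "a \<in> orlicz M Phi (e_p M p a)" "b \<in> orlicz M Phi (e_p M p a)"
    using orlicz_subset_e_p[OF p a] Bsp_orlicz[OF Sp_Bsp[OF a]] b by blast+
  then have "(\<lambda>x. (b x - a x) + (\<lambda>_. k) x) \<in> orlicz M Phi (e_p M p a)"
    by (intro orlicz_add[OF p1] orlicz_diff[OF p1] orlicz_const[OF p1])
  moreover have "AE x in M. (b x - a x) + (\<lambda>_. k) x = u x" using diff by (auto elim: AE_mp)
  ultimately show ?thesis by (rule orlicz_cong_AE[OF p1 _ u])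
qed

lemma s_p_e_p_AE:
  assumes "p \<in> pos_dens M"
  shows "\<exists>k. AE x in M. s_p M (e_p M p a) (e_p M p b) x = b x - a x + k"
  using ln_e_p_ratio_AE[OF assms, of b a] by (auto simp: s_p_def elim!: AE_mp)

lemma s_p_e_p_Bsp:
  assumes p: "p \<in> pos_dens M" and a: "a \<in> Sp M p" and b: "b \<in> Sp M p"
  shows "s_p M (e_p M p a) (e_p M p b) \<in> Bsp M (e_p M p a)"
proof -
  define l where "l = (\<lambda>x. ln (e_p M p b x / e_p M p a x))"
  note [measurable] = pos_dens_measurable[OF p] Sp_measurable[OF a] Sp_measurable[OF b]
  have "l \<in> orlicz M Phi (e_p M p a)" unfolding l_def
    by (rule orlicz_e_p_of_AE_diff[OF p a Bsp_orlicz[OF Sp_Bsp[OF b]] _ ln_e_p_ratio_AE[OF p]])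
      (simp add: e_p_def)
  then show ?thesis using Bsp_centered[OF e_p_pos_dens[OF p Sp_dom_K[OF a]]]
    by (simp add: s_p_def l_def)
qed

text \<open>The centred difference \<open>v - u\<close> is small in \<open>L\<^sup>\<Phi>(p)\<close> when it is small in \<open>L\<^sup>\<Phi>(e\<^sub>p a)\<close>, so
  \<open>b + (v - u) - E\<^sub>p (v - u)\<close> stays in \<open>S\<^sub>p\<close>; the cumulant integrals of \<open>v\<close> at \<open>e\<^sub>p a\<close> and of this
  function at \<open>p\<close> differ by a constant factor.\<close>

lemma Sp_e_p_of_AE_diff:
  assumes p: "p \<in> pos_dens M" and a: "a \<in> Sp M p" and b: "b \<in> Sp M p"
    and u: "u \<in> Bsp M (e_p M p a)" and diff: "AE x in M. u x = b x - a x + k"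
  shows "u \<in> Sp M (e_p M p a)"
proof -
  define p1 where "p1 = e_p M p a"
  have p1pd: "p1 \<in> pos_dens M" unfolding p1_def by (rule e_p_pos_dens[OF p Sp_dom_K[OF a]])
  note [measurable] = pos_dens_measurable[OF p] Sp_measurable[OF a] Sp_measurable[OF b]
  obtain eb where eb: "eb > 0" "\<forall>h\<in>Bsp M p. lux_norm M p h < eb \<longrightarrow> (\<lambda>x. b x + h x) \<in> Sp M p"
    using Sp_ball[OF p b] by blast
  obtain C where C: "C > 0" "\<forall>g\<in>orlicz M Phi p1. g \<in> orlicz M Phi p \<and> lux_norm M p g \<le> C * lux_norm M p1 g"
    using orlicz_embedding_from_e_p[OF p a] unfolding p1_def by blast
  define L1 where "L1 = lux_norm M p (\<lambda>_. 1)"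
  have L1: "L1 \<ge> 0" unfolding L1_def by (rule lux_norm_nonneg[OF p orlicz_const[OF p]])
  define \<epsilon> where "\<epsilon> = eb / (C * (1 + 4 * L1))"
  have \<epsilon>: "\<epsilon> > 0" using eb C L1 by (simp add: \<epsilon>_def)
  show ?thesis unfolding Sp_def p1_def[symmetric]
  proof (intro CollectI conjI exI[of _ \<epsilon>] ballI impI \<epsilon>)
    show uB: "u \<in> Bsp M p1" using u by (simp add: p1_def)
    fix v assume v: "v \<in> Bsp M p1" and vu: "lux_norm M p1 (\<lambda>x. v x - u x) < \<epsilon>"
    define g where "g = (\<lambda>x. v x - u x)"
    define g' where "g' = (\<lambda>x. g x - Ep M p g)"
    have "g \<in> orlicz M Phi p1" unfolding g_def by (rule Bsp_orlicz[OF Bsp_diff[OF p1pd v uB]])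
    then have g: "g \<in> orlicz M Phi p" "lux_norm M p g \<le> C * lux_norm M p1 g" using C by blast+
    have g'B: "g' \<in> Bsp M p" unfolding g'_def by (rule Bsp_centered[OF p g(1)])
    have "lux_norm M p g' \<le> (1 + 4 * L1) * lux_norm M p g"
      unfolding g'_def L1_def by (rule lux_norm_centered_le[OF p g(1)])
    also have "\<dots> \<le> (1 + 4 * L1) * (C * lux_norm M p1 g)" using g L1 by (intro mult_left_mono) auto
    also have "\<dots> < (1 + 4 * L1) * (C * \<epsilon>)"
      using vu C L1 unfolding g_def by (intro mult_strict_left_mono) auto
    also have "\<dots> = eb" using C L1 by (simp add: \<epsilon>_def)
    finally have "(\<lambda>x. b x + g' x) \<in> Sp M p" using eb g'B by blast
    note fin = dom_K_finite[OF Sp_dom_K[OF this]]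
    note [measurable] = orlicz_measurable[OF Bsp_orlicz[OF v]] orlicz_measurable[OF Bsp_orlicz[OF uB]]
    have "AE x in M. a x - Kp M p a + v x = (b x + g' x) + (k - Kp M p a + Ep M p g)"
      using diff by (rule AE_mp) (auto simp: g'_def g_def)
    then have "(\<integral>\<^sup>+x. ennreal (p x * exp (a x - Kp M p a + v x)) \<partial>M) < \<infinity>"
      by (rule nn_integral_exp_shift_finite[rotated 2, OF _ fin]) (simp_all add: g'_def g_def)
    moreover have "p1 x * exp (v x) = p x * exp (a x - Kp M p a + v x)" for x
      by (simp add: p1_def e_p_def exp_add)
    ultimately show "v \<in> dom_K M p1" using v by (simp add: dom_K_def)
  qed
qed

lemma e_p_e_p_AE:
  assumes p: "p \<in> pos_dens M" and a: "a \<in> borel_measurable M" and b: "b \<in> dom_K M p"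
    and u: "u \<in> borel_measurable M" and diff: "AE x in M. u x = b x - a x + k"
  shows "AE x in M. e_p M (e_p M p a) u x = e_p M p b x"
proof -
  note [measurable] = pos_dens_measurable[OF p] dom_K_measurable[OF b] a u
  have shift: "AE x in M. a x + u x = b x + k" using diff by (auto elim: AE_mp)
  have "(\<integral>\<^sup>+x. ennreal (p x * exp (a x + u x)) \<partial>M) < \<infinity>"
    by (rule nn_integral_exp_shift_finite[OF _ _ shift dom_K_finite[OF b]]) simp_all
  then have "e_p M (e_p M p a) u = e_p M p (\<lambda>x. a x + u x)" by (rule e_p_e_p[OF p a u])
  moreover have "AE x in M. e_p M p (\<lambda>x. a x + u x) x = e_p M p b x"
    by (rule e_p_shift_AE[OF p _ _ shift dom_K_finite[OF b]]) simp_all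
  ultimately show ?thesis by simp
qed

section \<open>Derivatives along exponential curves\<close>

lemma frechet_deriv_directional:
  assumes r: "r \<in> pos_dens M" and F: "frechet_deriv M r F u L" and h: "h \<in> Bsp M r"
    and line: "\<forall>\<^sub>F t in at_right 0. (\<lambda>x. u x + t * h x) \<in> Sp M r"
  shows "((\<lambda>t. (F (\<lambda>x. u x + t * h x) - F u) / t) \<longlongrightarrow> L h) (at_right 0)"
proof (rule tendsto_iff[THEN iffD2], intro allI impI)
  fix e :: real assume e: "e > 0"
  define N where "N = lux_norm M r h"
  have N: "N \<ge> 0" unfolding N_def by (rule lux_norm_nonneg[OF r Bsp_orlicz[OF h]])
  note F = F[unfolded frechet_deriv_def]
  have lin: "L (\<lambda>x. t * h x) = t * L h" for t
    using F[THEN conjunct1, rule_format, OF h h, of t 0] by simp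
  have "e / (N + 1) > 0" using e N by simp
  then obtain \<delta> where \<delta>: "\<delta> > 0" "\<forall>g\<in>Bsp M r. (\<lambda>x. u x + g x) \<in> Sp M r \<and> lux_norm M r g < \<delta> \<longrightarrow>
      \<bar>F (\<lambda>x. u x + g x) - F u - L g\<bar> \<le> e / (N + 1) * lux_norm M r g"
    using F by blast
  have "\<forall>\<^sub>F t in at_right 0. t \<in> {0<..<\<delta> / (N + 1)}"
    using \<delta> N by (intro eventually_at_right_real) simp
  with line show "\<forall>\<^sub>F t in at_right 0. dist ((F (\<lambda>x. u x + t * h x) - F u) / t) (L h) < e"
  proof eventually_elim
    case (elim t)
    then have t: "0 < t" "t * (N + 1) < \<delta>" using N by (auto simp: field_simps)
    have th: "(\<lambda>x. t * h x) \<in> Bsp M r" by (rule Bsp_scale[OF r h])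
    have norm_th: "lux_norm M r (\<lambda>x. t * h x) \<le> t * N"
      using lux_norm_scale_le[OF r Bsp_orlicz[OF h], of t] t by (simp add: N_def)
    also have "\<dots> \<le> t * (N + 1)" using t by (simp add: distrib_left)
    also have "\<dots> < \<delta>" by (rule t(2))
    finally have "\<bar>F (\<lambda>x. u x + t * h x) - F u - L (\<lambda>x. t * h x)\<bar> \<le> e / (N + 1) * lux_norm M r (\<lambda>x. t * h x)"
      using \<delta>(2)[rule_format, OF th] elim by blast
    then have "\<bar>F (\<lambda>x. u x + t * h x) - F u - t * L h\<bar> \<le> e / (N + 1) * lux_norm M r (\<lambda>x. t * h x)"
      by (simp only: lin)
    also have "\<dots> \<le> e / (N + 1) * (t * N)" using norm_th e N by (intro mult_left_mono) auto
    also have "\<dots> < e * t" using e t N by (simp add: field_simps)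
    finally show ?case using t by (simp add: dist_real_def field_simps)
  qed
qed

lemma Bsp_centered_e_p:
  assumes p: "p \<in> pos_dens M" and a: "a \<in> Sp M p" and w: "w \<in> orlicz M Phi p"
  shows "(\<lambda>x. w x - Ep M (e_p M p a) w) \<in> Bsp M (e_p M p a)"
  using Bsp_centered[OF e_p_pos_dens[OF p Sp_dom_K[OF a]]] orlicz_subset_e_p[OF p a] w by blast

lemma Sp_line:
  assumes r: "r \<in> pos_dens M" and u: "u \<in> Sp M r" and h: "h \<in> Bsp M r"
  shows "\<exists>T>0. \<forall>t. 0 \<le> t \<and> t < T \<longrightarrow> (\<lambda>x. u x + t * h x) \<in> Sp M r"
proof -
  obtain e where e: "e > 0" "\<forall>g\<in>Bsp M r. lux_norm M r g < e \<longrightarrow> (\<lambda>x. u x + g x) \<in> Sp M r"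
    using Sp_ball[OF r u] by blast
  define N where "N = lux_norm M r h"
  have N: "N \<ge> 0" unfolding N_def by (rule lux_norm_nonneg[OF r Bsp_orlicz[OF h]])
  show ?thesis
  proof (intro exI[of _ "e / (N + 1)"] conjI allI impI)
    show "e / (N + 1) > 0" using e N by simp
    fix t assume t: "0 \<le> t \<and> t < e / (N + 1)"
    have "lux_norm M r (\<lambda>x. t * h x) \<le> t * N"
      using lux_norm_scale_le[OF r Bsp_orlicz[OF h], of t] t by (simp add: N_def)
    also have "\<dots> \<le> t * (N + 1)" using t by (simp add: distrib_left)
    also have "\<dots> < e" using t N by (simp add: field_simps)
    finally show "(\<lambda>x. u x + t * h x) \<in> Sp M r" using e Bsp_scale[OF r h] by blast
  qed
qed

lemma Sp_e_p_line:
  assumes p: "p \<in> pos_dens M" and a: "a \<in> Sp M p" and b: "b \<in> Sp M p" and w: "w \<in> orlicz M Phi p"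
  defines "p1 \<equiv> e_p M p a" and "u1 \<equiv> s_p M (e_p M p a) (e_p M p b)"
  shows "\<exists>T>0. \<forall>t. 0 \<le> t \<and> t < T \<longrightarrow> (\<lambda>x. b x + t * (w x - Ep M p w)) \<in> Sp M p \<and>
      (\<lambda>x. u1 x + t * (w x - Ep M p1 w)) \<in> Sp M p1 \<and>
      (AE x in M. e_p M p1 (\<lambda>x. u1 x + t * (w x - Ep M p1 w)) x = e_p M p (\<lambda>x. b x + t * (w x - Ep M p w)) x)"
proof -
  have p1pd: "p1 \<in> pos_dens M" unfolding p1_def by (rule e_p_pos_dens[OF p Sp_dom_K[OF a]])
  note [measurable] = pos_dens_measurable[OF p] Sp_measurable[OF a] Sp_measurable[OF b] orlicz_measurable[OF w]
  define w' where "w' = (\<lambda>x. w x - Ep M p w)"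
  define h1 where "h1 = (\<lambda>x. w x - Ep M p1 w)"
  have w'B: "w' \<in> Bsp M p" unfolding w'_def by (rule Bsp_centered[OF p w])
  have h1B: "h1 \<in> Bsp M p1" unfolding h1_def p1_def by (rule Bsp_centered_e_p[OF p a w])
  have u1B: "u1 \<in> Bsp M p1" unfolding u1_def p1_def by (rule s_p_e_p_Bsp[OF p a b])
  obtain k where k: "AE x in M. u1 x = b x - a x + k" using s_p_e_p_AE[OF p] unfolding u1_def by blast
  obtain T where T: "T > 0" "\<forall>t. 0 \<le> t \<and> t < T \<longrightarrow> (\<lambda>x. b x + t * w' x) \<in> Sp M p"
    using Sp_line[OF p b w'B] by blast
  show ?thesis
  proof (intro exI[of _ T] conjI allI impI T(1))
    fix t assume "0 \<le> t \<and> t < T"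
    then have bt: "(\<lambda>x. b x + t * w' x) \<in> Sp M p" using T(2) by blast
    then show "(\<lambda>x. b x + t * (w x - Ep M p w)) \<in> Sp M p" by (simp add: w'_def)
    have diff: "AE x in M. u1 x + t * h1 x = (b x + t * w' x) - a x + (k + t * Ep M p w - t * Ep M p1 w)"
      using k by (rule AE_mp) (simp add: w'_def h1_def algebra_simps)
    have "(\<lambda>x. u1 x + t * h1 x) \<in> Bsp M p1" by (rule Bsp_add[OF p1pd u1B Bsp_scale[OF p1pd h1B]])
    then have "(\<lambda>x. u1 x + t * h1 x) \<in> Sp M p1"
      unfolding p1_def by (rule Sp_e_p_of_AE_diff[OF p a bt _ diff[unfolded p1_def]])
    then show "(\<lambda>x. u1 x + t * (w x - Ep M p1 w)) \<in> Sp M p1" by (simp add: h1_def)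
    have "AE x in M. e_p M p1 (\<lambda>x. u1 x + t * h1 x) x = e_p M p (\<lambda>x. b x + t * w' x) x"
      unfolding p1_def
      by (rule e_p_e_p_AE[OF p _ Sp_dom_K[OF bt] _ diff[unfolded p1_def]])
        (simp_all add: u1_def p1_def h1_def s_p_def e_p_def)
    then show "AE x in M. e_p M p1 (\<lambda>x. u1 x + t * (w x - Ep M p1 w)) x
        = e_p M p (\<lambda>x. b x + t * (w x - Ep M p w)) x" by (simp add: h1_def w'_def)
  qed
qed

lemma tendsto_E_e_p_line:
  assumes p: "p \<in> pos_dens M" and a: "a \<in> Sp M p" and b: "b \<in> Sp M p" and w: "w \<in> orlicz M Phi p"
    and E_ae: "\<And>r r'. r \<in> maxexp M p \<Longrightarrow> (AE x in M. r x = r' x) \<Longrightarrow> E r' = E r"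
    and L: "frechet_deriv M (e_p M p a) (\<lambda>v. E (e_p M (e_p M p a) v)) (s_p M (e_p M p a) (e_p M p b)) L"
  shows "((\<lambda>t. (E (e_p M p (\<lambda>x. b x + t * (w x - Ep M p w))) - E (e_p M p b)) / t)
           \<longlongrightarrow> L (\<lambda>x. w x - Ep M (e_p M p a) w)) (at_right 0)"
proof -
  define p1 where "p1 = e_p M p a"
  define u1 where "u1 = s_p M p1 (e_p M p b)"
  define h1 where "h1 = (\<lambda>x. w x - Ep M p1 w)"
  define bt where "bt t = (\<lambda>x. b x + t * (w x - Ep M p w))" for t
  obtain T where T: "T > 0" and line: "\<And>t. 0 \<le> t \<Longrightarrow> t < T \<Longrightarrow>
      bt t \<in> Sp M p \<and> (\<lambda>x. u1 x + t * h1 x) \<in> Sp M p1 \<and>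
      (AE x in M. e_p M p1 (\<lambda>x. u1 x + t * h1 x) x = e_p M p (bt t) x)"
    using Sp_e_p_line[OF p a b w] unfolding p1_def u1_def h1_def bt_def by (elim exE conjE) simp
  have E_line: "E (e_p M p1 (\<lambda>x. u1 x + t * h1 x)) = E (e_p M p (bt t))" if "0 \<le> t" "t < T" for t
  proof (rule E_ae)
    show "e_p M p (bt t) \<in> maxexp M p" using line[OF that] by (simp add: maxexp_def)
    show "AE x in M. e_p M p (bt t) x = e_p M p1 (\<lambda>x. u1 x + t * h1 x) x"
      using line[OF that] by (auto elim: AE_mp)
  qed
  have "\<forall>\<^sub>F t in at_right 0. t \<in> {0<..<T}" by (rule eventually_at_right_real[OF T])
  then have ev: "\<forall>\<^sub>F t in at_right 0. (E (e_p M p1 (\<lambda>x. u1 x + t * h1 x)) - E (e_p M p1 u1)) / t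
      = (E (e_p M p (bt t)) - E (e_p M p b)) / t"
    by eventually_elim (use E_line[of 0] T in \<open>simp add: E_line bt_def\<close>)
  have "((\<lambda>t. (E (e_p M p1 (\<lambda>x. u1 x + t * h1 x)) - E (e_p M p1 u1)) / t) \<longlongrightarrow> L h1) (at_right 0)"
  proof (rule frechet_deriv_directional[where F = "\<lambda>v. E (e_p M p1 v)"])
    show "p1 \<in> pos_dens M" unfolding p1_def by (rule e_p_pos_dens[OF p Sp_dom_K[OF a]])
    show "frechet_deriv M p1 (\<lambda>v. E (e_p M p1 v)) u1 L" using L by (simp add: p1_def u1_def)
    show "h1 \<in> Bsp M p1" unfolding h1_def p1_def by (rule Bsp_centered_e_p[OF p a w])
    show "\<forall>\<^sub>F t in at_right 0. (\<lambda>x. u1 x + t * h1 x) \<in> Sp M p1"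
      using eventually_at_right_real[OF T] by eventually_elim (simp add: line)
  qed
  then have "((\<lambda>t. (E (e_p M p (bt t)) - E (e_p M p b)) / t) \<longlongrightarrow> L h1) (at_right 0)"
    using tendsto_cong[OF ev] by blast
  then show ?thesis by (simp add: bt_def h1_def p1_def)
qed

lemma frechet_deriv_linear_on: "frechet_deriv M r F u L \<Longrightarrow> linear_on (Bsp M r) L"
  by (simp add: frechet_deriv_def linear_on_def)

lemma linear_on_centered:
  assumes p: "p \<in> pos_dens M" and B: "B \<subseteq> orlicz M Phi p" and L: "linear_on (Bsp M p) L"
  shows "linear_on B (\<lambda>w. L (\<lambda>x. w x - Ep M p w))"
  unfolding linear_on_def
proof (intro ballI allI)
  fix v w and \<alpha> \<beta> :: real assume "v \<in> B" "w \<in> B"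
  then have v: "v \<in> orlicz M Phi p" and w: "w \<in> orlicz M Phi p" using B by auto
  have "(\<lambda>x. \<alpha> * v x + \<beta> * w x - Ep M p (\<lambda>x. \<alpha> * v x + \<beta> * w x)) =
      (\<lambda>x. \<alpha> * (v x - Ep M p v) + \<beta> * (w x - Ep M p w))"
    by (simp add: Ep_lin[OF p v w] algebra_simps)
  moreover have "L (\<lambda>x. \<alpha> * (v x - Ep M p v) + \<beta> * (w x - Ep M p w)) =
      \<alpha> * L (\<lambda>x. v x - Ep M p v) + \<beta> * L (\<lambda>x. w x - Ep M p w)"
    using L[unfolded linear_on_def, rule_format, OF Bsp_centered[OF p v] Bsp_centered[OF p w]] by simp
  ultimately show "L (\<lambda>x. \<alpha> * v x + \<beta> * w x - Ep M p (\<lambda>x. \<alpha> * v x + \<beta> * w x)) =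
      \<alpha> * L (\<lambda>x. v x - Ep M p v) + \<beta> * L (\<lambda>x. w x - Ep M p w)" by simp
qed

lemma frechet_deriv_centered_unique:
  assumes p: "p \<in> pos_dens M"
    and E_ae: "\<And>r r'. r \<in> maxexp M p \<Longrightarrow> (AE x in M. r x = r' x) \<Longrightarrow> E r' = E r"
    and q: "q \<in> maxexp M p" and p1: "p1 \<in> maxexp M p" and p2: "p2 \<in> maxexp M p"
    and L1: "frechet_deriv M p1 (\<lambda>v. E (e_p M p1 v)) (s_p M p1 q) L1"
    and L2: "frechet_deriv M p2 (\<lambda>v. E (e_p M p2 v)) (s_p M p2 q) L2"
    and w: "w \<in> orlicz M Phi p"
  shows "L1 (\<lambda>x. w x - Ep M p1 w) = L2 (\<lambda>x. w x - Ep M p2 w)"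
proof -
  obtain b a1 a2 where b: "b \<in> Sp M p" "q = e_p M p b" and a1: "a1 \<in> Sp M p" "p1 = e_p M p a1"
    and a2: "a2 \<in> Sp M p" "p2 = e_p M p a2"
    using q p1 p2 by (auto simp: maxexp_def)
  show ?thesis
    unfolding a1(2) a2(2)
    by (rule tendsto_unique[OF trivial_limit_at_right_real
          tendsto_E_e_p_line[OF p a1(1) b(1) w E_ae L1[unfolded a1(2) b(2)]]
          tendsto_E_e_p_line[OF p a2(1) b(1) w E_ae L2[unfolded a2(2) b(2)]]])
qed

section \<open>The gradient\<close>

lemma young_exp_Phi_star:
  fixes X Y :: real
  assumes "0 \<le> X" "0 \<le> Y"
  shows "X * Y \<le> exp X - 1 - X + Phi_star Y"
proof -
  define t where "t = ln (1 + Y)"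
  have et: "exp t = 1 + Y" using assms by (simp add: t_def)
  have "exp X = exp t * exp (X - t)" by (simp add: exp_diff)
  also have "\<dots> \<ge> exp t * (1 + (X - t))" using exp_ge_add_one_self[of "X - t"] et assms
    by (intro mult_left_mono) auto
  finally have "exp X \<ge> 1 + X - t + Y + X * Y - Y * t" using et by (simp add: algebra_simps)
  moreover have "Phi_star Y = t + Y * t - Y" using assms by (simp add: Phi_star_def t_def algebra_simps)
  ultimately show ?thesis by linarith
qed

lemma Phi_star_nonneg: "0 \<le> Phi_star y"
  using young_exp_Phi_star[of 0 "\<bar>y\<bar>"] by (simp add: Phi_star_def)

lemma measurable_Phi_star[measurable]:
  "f \<in> borel_measurable M \<Longrightarrow> (\<lambda>x. Phi_star (f x)) \<in> borel_measurable M"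
  by (rule borel_measurable_continuous_on[where f = Phi_star])
    (auto simp: Phi_star_def intro!: continuous_intros)

lemma abs_mult_le_Phi_Phi_star:
  assumes "\<alpha> > 0" "\<beta> > 0"
  shows "\<bar>g * f\<bar> \<le> (2 * Phi (\<alpha> * f) + 2 + Phi_star (\<beta> * g)) / (\<alpha> * \<beta>)"
proof -
  have "\<bar>\<alpha> * f\<bar> * \<bar>\<beta> * g\<bar> \<le> exp \<bar>\<alpha> * f\<bar> - 1 - \<bar>\<alpha> * f\<bar> + Phi_star \<bar>\<beta> * g\<bar>"
    by (rule young_exp_Phi_star) auto
  also have "\<dots> \<le> 2 * Phi (\<alpha> * f) + 2 + Phi_star (\<beta> * g)"
    using exp_abs_le_Phi[of "\<alpha> * f"] by (simp add: Phi_star_def)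
  finally show ?thesis using assms by (simp add: field_simps abs_mult)
qed

lemma integrable_Phi_Phi_star:
  assumes p: "p \<in> pos_dens M" and f: "f \<in> orlicz M Phi p" and g: "g \<in> orlicz M Phi_star p"
  shows "integrable M (\<lambda>x. p x * (g x * f x))"
proof -
  obtain \<alpha> where [measurable]: "f \<in> borel_measurable M" and \<alpha>: "\<alpha> > 0"
      and A: "(\<integral>\<^sup>+x. ennreal (p x * Phi (\<alpha> * f x)) \<partial>M) < \<infinity>" using f by (auto simp: orlicz_def)
  obtain \<beta> where [measurable]: "g \<in> borel_measurable M" and \<beta>: "\<beta> > 0"
      and B: "(\<integral>\<^sup>+x. ennreal (p x * Phi_star (\<beta> * g x)) \<partial>M) < \<infinity>" using g by (auto simp: orlicz_def)
  note [measurable] = pos_dens_measurable[OF p]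
  have "integrable M (\<lambda>x. p x * Phi (\<alpha> * f x))"
    by (rule integrable_density_nonneg[OF p _ Phi_nonneg A]) simp
  moreover have "integrable M (\<lambda>x. p x * Phi_star (\<beta> * g x))"
    by (rule integrable_density_nonneg[OF p _ Phi_star_nonneg B]) simp
  moreover have "integrable M p" using p by (simp add: pos_dens_def)
  ultimately have "integrable M (\<lambda>x. (2 * (p x * Phi (\<alpha> * f x)) + 2 * p x + p x * Phi_star (\<beta> * g x)) / (\<alpha> * \<beta>))"
    by simp
  then show ?thesis
  proof (rule Bochner_Integration.integrable_bound)
    show "AE x in M. norm (p x * (g x * f x))
        \<le> norm ((2 * (p x * Phi (\<alpha> * f x)) + 2 * p x + p x * Phi_star (\<beta> * g x)) / (\<alpha> * \<beta>))"
      using pos_dens_AE_nonneg[OF p]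
    proof (rule AE_mp, intro AE_I2 impI)
      fix x assume px: "0 \<le> p x"
      have "p x * \<bar>g x * f x\<bar> \<le> p x * ((2 * Phi (\<alpha> * f x) + 2 + Phi_star (\<beta> * g x)) / (\<alpha> * \<beta>))"
        using abs_mult_le_Phi_Phi_star[OF \<alpha> \<beta>] px by (rule mult_left_mono)
      then show "norm (p x * (g x * f x))
          \<le> norm ((2 * (p x * Phi (\<alpha> * f x)) + 2 * p x + p x * Phi_star (\<beta> * g x)) / (\<alpha> * \<beta>))"
        using px \<alpha> \<beta> Phi_nonneg[of "\<alpha> * f x"] Phi_star_nonneg[of "\<beta> * g x"]
        by (simp add: abs_mult field_simps)
    qed
  qed simp
qed

lemma centered_gradient_formula:
  assumes p: "p \<in> pos_dens M" and q: "q \<in> maxexp M p" and nab: "nab \<in> Bstar M p"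
    and grad: "\<forall>v\<in>Bsp M p. L v = Ep M p (\<lambda>x. nab x * v x)" and g: "g \<in> orlicz M Phi p"
  shows "L (\<lambda>x. g x - Ep M p g) = Ep M q (\<lambda>x. p x / q x * nab x * g x)"
proof -
  have nab_orlicz: "nab \<in> orlicz M Phi_star p" and nab0: "Ep M p nab = 0" using nab by (auto simp: Bstar_def)
  have "L (\<lambda>x. g x - Ep M p g) = Ep M p (\<lambda>x. nab x * (g x - Ep M p g))"
    using grad Bsp_centered[OF p g] by blast
  also have "\<dots> = (\<integral>x. p x * (nab x * g x) - Ep M p g * (p x * nab x) \<partial>M)"
    unfolding Ep_def by (rule Bochner_Integration.integral_cong) (simp_all add: algebra_simps)
  also have "\<dots> = (\<integral>x. p x * (nab x * g x) \<partial>M) - Ep M p g * Ep M p nab"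
    using integrable_Phi_Phi_star[OF p g nab_orlicz] integrable_Phi_Phi_star[OF p orlicz_const[OF p, of 1] nab_orlicz]
    by (simp add: Ep_def)
  also have "\<dots> = (\<integral>x. p x * (nab x * g x) \<partial>M)" by (simp add: nab0)
  also have "\<dots> = Ep M q (\<lambda>x. p x / q x * nab x * g x)"
    unfolding Ep_def
  proof (rule Bochner_Integration.integral_cong)
    fix x
    have "q x = 0 \<Longrightarrow> p x = 0" using q by (auto simp: maxexp_def e_p_def)
    then show "p x * (nab x * g x) = q x * (p x / q x * nab x * g x)" by (cases "q x = 0") auto
  qed simp
  finally show ?thesis .
qed

theorem proposition5:
  fixes M :: "'a measure" and p q :: "'a \<Rightarrow> real" and E :: "('a \<Rightarrow> real) \<Rightarrow> real"
  assumes sf: "sigma_finite_measure M"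
    and p: "p \<in> pos_dens M"
    and E_ae: "\<And>r r'. r \<in> maxexp M p \<Longrightarrow> (AE x in M. r x = r' x) \<Longrightarrow> E r' = E r"
    and E_diff: "\<And>r u. r \<in> maxexp M p \<Longrightarrow> u \<in> Sp M r \<Longrightarrow>
                    \<exists>L. frechet_deriv M r (\<lambda>v. E (e_p M r v)) u L"
    and q: "q \<in> maxexp M p"
  shows
    "(\<forall>p1 p2 L1 L2 w. p1 \<in> maxexp M p \<longrightarrow> p2 \<in> maxexp M p \<longrightarrow>
        frechet_deriv M p1 (\<lambda>v. E (e_p M p1 v)) (s_p M p1 q) L1 \<longrightarrow>
        frechet_deriv M p2 (\<lambda>v. E (e_p M p2 v)) (s_p M p2 q) L2 \<longrightarrow>
        w \<in> Bsp M q \<longrightarrow>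
        L1 (\<lambda>x. w x - Ep M p1 w) = L2 (\<lambda>x. w x - Ep M p2 w))
   \<and> (\<forall>L. frechet_deriv M p (\<lambda>v. E (e_p M p v)) (s_p M p q) L \<longrightarrow>
        linear_on (Bsp M q) (\<lambda>w. L (\<lambda>x. w x - Ep M p w)))
   \<and> (\<forall>L nab G. frechet_deriv M p (\<lambda>v. E (e_p M p v)) (s_p M p q) L \<longrightarrow>
        nab \<in> Bstar M p \<longrightarrow>
        (\<forall>v\<in>Bsp M p. L v = Ep M p (\<lambda>x. nab x * v x)) \<longrightarrow>
        (\<forall>r\<in>maxexp M p. G r \<in> Bsp M r) \<longrightarrow>
        L (\<lambda>x. G q x - Ep M p (G q)) = Ep M q (\<lambda>x. p x / q x * nab x * G q x))"
proof -
  have Bq: "Bsp M q \<subseteq> orlicz M Phi p" using orlicz_maxexp_subset[OF p q] by (auto simp: Bsp_def)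
  show ?thesis
  proof (intro conjI allI impI)
    fix p1 p2 L1 L2 w
    assume p12: "p1 \<in> maxexp M p" "p2 \<in> maxexp M p" and w: "w \<in> Bsp M q"
      and L1: "frechet_deriv M p1 (\<lambda>v. E (e_p M p1 v)) (s_p M p1 q) L1"
      and L2: "frechet_deriv M p2 (\<lambda>v. E (e_p M p2 v)) (s_p M p2 q) L2"
    show "L1 (\<lambda>x. w x - Ep M p1 w) = L2 (\<lambda>x. w x - Ep M p2 w)"
      using w Bq by (intro frechet_deriv_centered_unique[OF p E_ae q p12 L1 L2]) auto
  next
    fix L assume "frechet_deriv M p (\<lambda>v. E (e_p M p v)) (s_p M p q) L"
    then show "linear_on (Bsp M q) (\<lambda>w. L (\<lambda>x. w x - Ep M p w))"
      by (rule linear_on_centered[OF p Bq frechet_deriv_linear_on])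
  next
    fix L nab G
    assume "nab \<in> Bstar M p" "\<forall>v\<in>Bsp M p. L v = Ep M p (\<lambda>x. nab x * v x)" "\<forall>r\<in>maxexp M p. G r \<in> Bsp M r"
    with Bq q show "L (\<lambda>x. G q x - Ep M p (G q)) = Ep M q (\<lambda>x. p x / q x * nab x * G q x)"
      by (blast intro: centered_gradient_formula[OF p q])
  qed
qed

end
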